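(* Let $(G,X,\Gamma)$ be a $(\mu,\nu)$-path system group containing a $\delta$-constricting element $(g,A)$ with $\delta$-constricting map $\pi_A\colon X\to A$. For every $\varepsilon\ge0$ and $\theta\ge0$ there exists $M\in\mathbb N_{\ge1}$ with the following property. Let $H\le G$ be a subgroup and $Y\subseteq X$ a non-empty $H$-invariant subset with $\operatorname{diam}_A(Y)\le\varepsilon$. Then for every $u\in\langle g^M, H\cap E(g,A)\rangle\setminus (H\cap E(g,A))$, we have $d_A(Y,uY)>\theta$.
   Context: A path is a rectifiable continuous map $\alpha\colon[a,b]\to X$ parametrised by arc length; it is a $(\kappa,\lambda)$-quasi-geodesic if $d(\alpha(t),\alpha(t'))\le|t-t'|\le\kappa d(\alpha(t),\alpha(t'))+\lambda$. A $(\mu,\nu)$-path system group $(G,X,\Gamma)$ is a group $G$ acting properly by isometries on a geodesic metric space $X$ together with a $G$-invariant collection $\Gamma$ of paths closed under subpaths, such that any two points are joined by an element of $\Gamma$ and every element is a $(\mu,\nu)$-quasi-geodesic. A map $\pi_A\colon X\to A$ is $\delta$-constricting if (CS1) $d(x,\pi_A(x))\le\delta$ for $x\in A$, and (CS2) for all $x,y\in X$ and $\gamma\in\Gamma$ joining them, if $d(\pi_A(x),\pi_A(y))>\delta$ then $\gamma$ meets $B_X(\pi_A(x),\delta)$ and $B_X(\pi_A(y),\delta)$. An element $g$ is $\delta$-constricting, written $(g,A)$, if it has infinite order and $A$ is a $\langle g\rangle$-invariant subset with a $\delta$-constricting map, on which $\langle g\rangle$ acts $\delta$-coboundedly. $\operatorname{diam}_A(Y)=\operatorname{diam}(\pi_A(Y))$,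 $d_A(Y,Z)=\inf\{d(\pi_A(y),\pi_A(z)): y\in Y,z\in Z\}$. The elementary closure is $E(g,A)=\{u\in G: d_{Haus}(uA,A)<\infty\}$. *)

theory Defs
  imports "HOL-Analysis.Analysis" "HOL-Algebra.Group_Action" "HOL-Algebra.Generated_Groups"
begin

text \<open>Metric space X is the whole type 'x (class metric_space).
 A path is a triple (a, b, alpha) with alpha restricted to the interval [a,b].\<close>

type_synonym 'x pth = "real \<times> real \<times> (real \<Rightarrow> 'x)"

definition geodesic_space :: "'x::metric_space itself \<Rightarrow> bool" where
  "geodesic_space _ \<longleftrightarrow> (\<forall>x y::'x. \<exists>\<gamma>. \<gamma> 0 = x \<and> \<gamma> (dist x y) = y \<and>
     (\<forall>s\<in>{0..dist x y}. \<forall>t\<in>{0..dist x y}. dist (\<gamma> s) (\<gamma> t) = \<bar>s - t\<bar>))"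

definition path_length :: "(real \<Rightarrow> 'x::metric_space) \<Rightarrow> real \<Rightarrow> real \<Rightarrow> ereal" where
  "path_length \<alpha> s t = (SUP (p, n) \<in> {(p, n). p 0 = s \<and> p n = t \<and> (\<forall>i<n. p i \<le> p (Suc i))}.
       ereal (\<Sum>i<n. dist (\<alpha> (p i)) (\<alpha> (p (Suc i)))))"

definition arc_path :: "'x::metric_space pth \<Rightarrow> bool" where
  "arc_path P = (case P of (a, b, \<alpha>) \<Rightarrow> a \<le> b \<and> continuous_on {a..b} \<alpha> \<and>
     (\<forall>s t. a \<le> s \<and> s \<le> t \<and> t \<le> b \<longrightarrow> path_length \<alpha> s t = ereal (t - s)))"

definition quasi_geodesic :: "real \<Rightarrow> real \<Rightarrow> 'x::metric_space pth \<Rightarrow> bool" where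
  "quasi_geodesic \<kappa> lam P = (case P of (a, b, \<alpha>) \<Rightarrow>
     (\<forall>t\<in>{a..b}. \<forall>t'\<in>{a..b}. dist (\<alpha> t) (\<alpha> t') \<le> \<bar>t - t'\<bar> \<and>
        \<bar>t - t'\<bar> \<le> \<kappa> * dist (\<alpha> t) (\<alpha> t') + lam))"

definition joins :: "'x pth \<Rightarrow> 'x \<Rightarrow> 'x \<Rightarrow> bool" where
  "joins P x y = (case P of (a, b, \<alpha>) \<Rightarrow> \<alpha> a = x \<and> \<alpha> b = y)"

definition path_image :: "'x pth \<Rightarrow> 'x set" where
  "path_image P = (case P of (a, b, \<alpha>) \<Rightarrow> \<alpha> ` {a..b})"

definition proper_action :: "('g, 'm) monoid_scheme \<Rightarrow> ('g \<Rightarrow> 'x::metric_space \<Rightarrow> 'x) \<Rightarrow> bool" where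
  "proper_action G \<phi> \<longleftrightarrow> (\<forall>x r. finite {h \<in> carrier G. \<exists>y. dist x y \<le> r \<and> dist x (\<phi> h y) \<le> r})"

definition path_system_group ::
  "real \<Rightarrow> real \<Rightarrow> ('g, 'm) monoid_scheme \<Rightarrow> ('g \<Rightarrow> 'x::metric_space \<Rightarrow> 'x) \<Rightarrow> 'x pth set \<Rightarrow> bool" where
  "path_system_group \<mu> \<nu> G \<phi> \<Gamma> \<longleftrightarrow>
     group_action G UNIV \<phi> \<and>
     (\<forall>h\<in>carrier G. \<forall>x y. dist (\<phi> h x) (\<phi> h y) = dist x y) \<and>
     proper_action G \<phi> \<and>
     geodesic_space TYPE('x) \<and>
     (\<forall>h\<in>carrier G. \<forall>(a, b, \<alpha>)\<in>\<Gamma>. (a, b, \<phi> h \<circ> \<alpha>) \<in> \<Gamma>) \<and>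
     (\<forall>(a, b, \<alpha>)\<in>\<Gamma>. \<forall>a' b'. a \<le> a' \<and> a' \<le> b' \<and> b' \<le> b \<longrightarrow> (a', b', \<alpha>) \<in> \<Gamma>) \<and>
     (\<forall>x y. \<exists>P\<in>\<Gamma>. joins P x y) \<and>
     (\<forall>P\<in>\<Gamma>. arc_path P \<and> quasi_geodesic \<mu> \<nu> P)"

definition constricting_map ::
  "'x::metric_space pth set \<Rightarrow> real \<Rightarrow> 'x set \<Rightarrow> ('x \<Rightarrow> 'x) \<Rightarrow> bool" where
  "constricting_map \<Gamma> \<delta> A \<pi> \<longleftrightarrow> range \<pi> \<subseteq> A \<and>
     (\<forall>x\<in>A. dist x (\<pi> x) \<le> \<delta>) \<and>
     (\<forall>x y. \<forall>P\<in>\<Gamma>. joins P x y \<and> dist (\<pi> x) (\<pi> y) > \<delta> \<longrightarrow>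
        path_image P \<inter> cball (\<pi> x) \<delta> \<noteq> {} \<and> path_image P \<inter> cball (\<pi> y) \<delta> \<noteq> {})"

definition constricting_element ::
  "('g, 'm) monoid_scheme \<Rightarrow> ('g \<Rightarrow> 'x::metric_space \<Rightarrow> 'x) \<Rightarrow> 'x pth set \<Rightarrow> real \<Rightarrow> 'g \<Rightarrow> 'x set \<Rightarrow> ('x \<Rightarrow> 'x) \<Rightarrow> bool" where
  "constricting_element G \<phi> \<Gamma> \<delta> g A \<pi> \<longleftrightarrow>
     g \<in> carrier G \<and> (\<forall>n::nat. n > 0 \<longrightarrow> g [^]\<^bsub>G\<^esub> n \<noteq> \<one>\<^bsub>G\<^esub>) \<and>
     (\<forall>n::int. \<phi> (g [^]\<^bsub>G\<^esub> n) ` A = A) \<and>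
     constricting_map \<Gamma> \<delta> A \<pi> \<and>
     (\<forall>x\<in>A. \<forall>y\<in>A. \<exists>n::int. dist (\<phi> (g [^]\<^bsub>G\<^esub> n) x) y \<le> \<delta>)"

definition elem_closure :: "('g, 'm) monoid_scheme \<Rightarrow> ('g \<Rightarrow> 'x::metric_space \<Rightarrow> 'x) \<Rightarrow> 'x set \<Rightarrow> 'g set" where
  "elem_closure G \<phi> A = {u \<in> carrier G. \<exists>r::real.
     (\<forall>a\<in>A. \<exists>b\<in>A. dist (\<phi> u a) b \<le> r) \<and> (\<forall>b\<in>A. \<exists>a\<in>A. dist b (\<phi> u a) \<le> r)}"

definition proj_dist :: "('x::metric_space \<Rightarrow> 'x) \<Rightarrow> 'x set \<Rightarrow> 'x set \<Rightarrow> real" where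
  "proj_dist \<pi> Y Z = Inf {dist (\<pi> y) (\<pi> z) | y z. y \<in> Y \<and> z \<in> Z}"

end

(*
  The elementary closure E = E(g,A) coarsely preserves A; consequently pi_A is coarsely
  E-equivariant and E is a finite union of cosets of <g>. Fix a point o = g^j x0 of A close to
  pi_A(Y). Every element of H \<inter> E moves pi_A(Y), hence o, only a bounded distance c, and so do
  all its powers. By properness its conjugate by g^j is a torsion element of E in a finite set
  independent of H and Y, and a torsion element of E conjugating g^m into <g> conjugates it to
  g^m or g^-m. So a common power g^P is conjugated to g^P or g^-P by all of H \<inter> E, and for M a
  large multiple of P every u in <g^M, H \<inter> E> outside H \<inter> E has the form g^(Mi) k with i \<noteq> 0 and
  k in H \<inter> E. Such u translates o by at least |Mi| - c, which separates pi_A(Y) from pi_A(uY).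
*)

theory Submission
  imports Defs "HOL-Algebra.Multiplicative_Group"
begin

section \<open>Conjugating powers of an element of infinite order\<close>

definition conj_pow_pm :: "('g, 'm) monoid_scheme \<Rightarrow> 'g \<Rightarrow> int \<Rightarrow> 'g \<Rightarrow> bool" where
  "conj_pow_pm G g m k \<longleftrightarrow>
     k \<otimes>\<^bsub>G\<^esub> g [^]\<^bsub>G\<^esub> m \<otimes>\<^bsub>G\<^esub> inv\<^bsub>G\<^esub> k \<in> {g [^]\<^bsub>G\<^esub> m, g [^]\<^bsub>G\<^esub> (- m)}"

context group
begin

lemma mult_inv_cancel_right [simp]: "x \<in> carrier G \<Longrightarrow> y \<in> carrier G \<Longrightarrow> x \<otimes> y \<otimes> inv y = x"
  by (simp add: m_assoc)

lemma mult_inv_cancel_right' [simp]: "x \<in> carrier G \<Longrightarrow> y \<in> carrier G \<Longrightarrow> x \<otimes> inv y \<otimes> y = x"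
  by (simp add: m_assoc)

lemma group_hom_conj:
  assumes "k \<in> carrier G"
  shows "group_hom G G (\<lambda>z. k \<otimes> z \<otimes> inv k)"
proof -
  have "(\<lambda>z. k \<otimes> z \<otimes> inv k) \<in> hom G G"
  proof (rule homI)
    fix x y assume "x \<in> carrier G" "y \<in> carrier G"
    then show "k \<otimes> (x \<otimes> y) \<otimes> inv k = k \<otimes> x \<otimes> inv k \<otimes> (k \<otimes> y \<otimes> inv k)"
      using assms by (simp add: m_assoc[symmetric])
  qed (use assms in simp)
  then show ?thesis
    by (simp add: group_hom_def group_hom_axioms_def is_group)
qed

lemma conj_int_pow:
  assumes "k \<in> carrier G" "y \<in> carrier G"
  shows "k \<otimes> y [^] (n::int) \<otimes> inv k = (k \<otimes> y \<otimes> inv k) [^] n"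
  using group_hom.hom_int_pow[OF group_hom_conj] assms by blast

lemma conj_nat_pow:
  assumes "c \<in> carrier G" "k \<in> carrier G"
  shows "(inv c \<otimes> k \<otimes> c) [^] (n::nat) = inv c \<otimes> k [^] n \<otimes> c"
  using conj_int_pow[of "inv c" k "int n"] assms by (simp add: int_pow_int)

lemma int_pow_eq_iff_of_infinite_order:
  assumes "g \<in> carrier G" "\<forall>n::nat. n > 0 \<longrightarrow> g [^] n \<noteq> \<one>"
  shows "g [^] (i::int) = g [^] j \<longleftrightarrow> i = j"
  using assms finite_cyclic_subgroup[of g] infinite_cyclic_subgroup_int[of g] by blast

lemma torsion_of_finite_powers:
  assumes "k \<in> carrier G" "finite (range (\<lambda>n::nat. k [^] n))"
  shows "\<exists>q::nat. q > 0 \<and> k [^] q = \<one>"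
proof -
  have "\<not> inj (\<lambda>n::nat. k [^] n)"
    using assms(2) range_inj_infinite by blast
  then show ?thesis
    using assms(1) finite_cyclic_subgroup[of k] infinite_cyclic_subgroup[of k]
    by (auto simp: inj_def)
qed

lemma conj_pow_pm_multiple:
  assumes "g \<in> carrier G" "k \<in> carrier G" "conj_pow_pm G g m k"
  shows "conj_pow_pm G g (m * r) k"
proof -
  have "k \<otimes> g [^] (m * r) \<otimes> inv k = (k \<otimes> g [^] m \<otimes> inv k) [^] r"
    using assms conj_int_pow[of k "g [^] m" r] int_pow_pow[of g m r] by simp
  moreover have "(g [^] s) [^] r = g [^] (s * r)" for s
    using assms(1) by (rule int_pow_pow)
  ultimately show ?thesis
    using assms(3) unfolding conj_pow_pm_def by auto
qed

lemma conj_pow_pm_of_conj_by_pow: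
  assumes "g \<in> carrier G" "k \<in> carrier G"
    and "conj_pow_pm G g m (inv (g [^] (j::int)) \<otimes> k \<otimes> g [^] j)"
  shows "conj_pow_pm G g m k"
proof -
  let ?c = "g [^] j" let ?k' = "inv ?c \<otimes> k \<otimes> ?c"
  have c: "?c \<in> carrier G" using assms(1) by simp
  interpret conj: group_hom G G "\<lambda>z. ?c \<otimes> z \<otimes> inv ?c" by (rule group_hom_conj[OF c])
  have fix_pow: "?c \<otimes> g [^] n \<otimes> inv ?c = g [^] n" for n :: int
  proof -
    have "?c \<otimes> g [^] n = g [^] n \<otimes> ?c"
      using assms(1) int_pow_mult[of g j n] int_pow_mult[of g n j] by (simp add: add.commute)
    then show ?thesis using assms(1) by (simp add: m_assoc)
  qed
  have "?c \<otimes> ?k' \<otimes> inv ?c = k"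
    using assms(2) c by (simp add: m_assoc[symmetric])
  then have "k \<otimes> g [^] m \<otimes> inv k = ?c \<otimes> (?k' \<otimes> g [^] m \<otimes> inv ?k') \<otimes> inv ?c"
    using conj.hom_mult[of "?k' \<otimes> g [^] m" "inv ?k'"] conj.hom_mult[of ?k' "g [^] m"]
      conj.hom_inv[of ?k'] assms c fix_pow[of m] by simp
  then show ?thesis
    using assms(3) fix_pow unfolding conj_pow_pm_def by auto
qed

lemma conj_pow_iterate:
  assumes g: "g \<in> carrier G" and k: "k \<in> carrier G"
    and conj: "k \<otimes> g [^] (m::int) \<otimes> inv k = g [^] (a::int)"
  shows "k [^] (j::nat) \<otimes> g [^] (m ^ j) \<otimes> inv (k [^] j) = g [^] (a ^ j)"
proof (induction j)
  case 0
  then show ?case using g by simp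
next
  case (Suc j)
  have kj: "k [^] j \<in> carrier G" using k by simp
  have "k \<otimes> g [^] (m ^ Suc j) \<otimes> inv k = (k \<otimes> g [^] m \<otimes> inv k) [^] (m ^ j)"
    using conj_int_pow[OF k, of "g [^] m" "m ^ j"] int_pow_pow[OF g, of m "m ^ j"] g by simp
  also have "\<dots> = (g [^] (m ^ j)) [^] a"
    using conj int_pow_pow[OF g] by (simp add: mult.commute)
  finally have step: "k \<otimes> g [^] (m ^ Suc j) \<otimes> inv k = (g [^] (m ^ j)) [^] a" .
  have "k [^] Suc j \<otimes> g [^] (m ^ Suc j) \<otimes> inv (k [^] Suc j)
        = k [^] j \<otimes> (k \<otimes> g [^] (m ^ Suc j) \<otimes> inv k) \<otimes> inv (k [^] j)"
    using k kj g by (simp add: inv_mult_group m_assoc)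
  also have "\<dots> = (k [^] j \<otimes> g [^] (m ^ j) \<otimes> inv (k [^] j)) [^] a"
    using step conj_int_pow[OF kj, of "g [^] (m ^ j)" a] g by simp
  also have "\<dots> = g [^] (a ^ Suc j)"
    using Suc int_pow_pow[OF g] by (simp add: mult.commute)
  finally show ?case .
qed

text \<open>A torsion element conjugating \<open>g\<^sup>m\<close> into \<open>\<langle>g\<rangle>\<close> conjugates it to \<open>g\<^sup>\<plusminus>\<^sup>m\<close>:
  iterating the conjugation \<open>q\<close> times gives \<open>m\<^sup>q = a\<^sup>q\<close>.\<close>

lemma conj_pow_pm_of_torsion:
  assumes g: "g \<in> carrier G" and g_inf: "\<forall>n::nat. n > 0 \<longrightarrow> g [^] n \<noteq> \<one>"
    and k: "k \<in> carrier G" and torsion: "q > 0" "k [^] (q::nat) = \<one>"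
    and conj: "k \<otimes> g [^] (m::int) \<otimes> inv k = g [^] (a::int)"
  shows "conj_pow_pm G g m k"
proof -
  have "g [^] (m ^ q) = g [^] (a ^ q)"
    using conj_pow_iterate[OF g k conj, of q] torsion g by simp
  then have "m ^ q = a ^ q"
    using int_pow_eq_iff_of_infinite_order[OF g g_inf] by simp
  then have "\<bar>a\<bar> ^ q = \<bar>m\<bar> ^ q"
    by (metis power_abs)
  then have "\<bar>a\<bar> = \<bar>m\<bar>"
    using power_eq_imp_eq_base[of "\<bar>a\<bar>" q "\<bar>m\<bar>"] torsion(1) by simp
  then have "a = m \<or> a = - m"
    by arith
  then show ?thesis
    using conj unfolding conj_pow_pm_def by auto
qed

lemma conj_pow_of_finite_cosets:
  assumes g: "g \<in> carrier G" and k: "k \<in> carrier G" and F: "finite F"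
    and cosets: "\<forall>n::nat. \<exists>a::int. inv (g [^] a) \<otimes> (k \<otimes> g [^] (int n) \<otimes> inv k) \<in> F"
  shows "\<exists>m::nat. m > 0 \<and> (\<exists>a::int. k \<otimes> g [^] (int m) \<otimes> inv k = g [^] a)"
proof -
  define c where "c n = k \<otimes> g [^] (int n) \<otimes> inv k" for n :: nat
  obtain a :: "nat \<Rightarrow> int" where a: "\<forall>n. inv (g [^] a n) \<otimes> c n \<in> F"
    using choice[OF cosets] unfolding c_def by blast
  define f where "f n = inv (g [^] a n) \<otimes> c n" for n
  have c_carrier: "c n \<in> carrier G" for n
    unfolding c_def using g k by simp
  have "range f \<subseteq> F"
    using a unfolding f_def by auto
  then have "\<not> inj f"
    using F finite_subset range_inj_infinite by blast
  then obtain p q where "p \<noteq> q" "f p = f q"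
    unfolding inj_def by blast
  then obtain p q where pq: "p < q" "f p = f q"
    by (metis linorder_neqE_nat)
  have c_eq: "c n = g [^] a n \<otimes> f n" for n
    unfolding f_def using c_carrier g by (simp add: m_assoc[symmetric])
  have f_carrier: "f n \<in> carrier G" for n
    unfolding f_def using c_carrier g by simp
  have "c q \<otimes> inv (c p) = g [^] a q \<otimes> inv (g [^] a p)"
    using c_eq[of q] c_eq[of p] pq(2) f_carrier g by (simp add: inv_mult_group m_assoc[symmetric])
  also have "\<dots> = g [^] (a q - a p)"
    using int_pow_diff g by simp
  finally have diff: "c q \<otimes> inv (c p) = g [^] (a q - a p)" .
  interpret conj: group_hom G G "\<lambda>z. k \<otimes> z \<otimes> inv k" by (rule group_hom_conj[OF k])
  have "c q \<otimes> inv (c p) = k \<otimes> (g [^] (int q) \<otimes> inv (g [^] (int p))) \<otimes> inv k"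
    unfolding c_def
    using conj.hom_mult[of "g [^] (int q)" "inv (g [^] (int p))"] conj.hom_inv[of "g [^] (int p)"] g
    by simp
  also have "\<dots> = k \<otimes> g [^] (int (q - p)) \<otimes> inv k"
    using int_pow_diff[OF g, of "int q" "int p"] pq(1) by (simp add: of_nat_diff)
  finally have "k \<otimes> g [^] (int (q - p)) \<otimes> inv k = g [^] (a q - a p)"
    using diff by simp
  then show ?thesis
    using pq(1) by (intro exI[of _ "q - p"]) auto
qed

lemma common_conj_pow_pm_exponent:
  assumes g: "g \<in> carrier G" and F: "finite F" "F \<subseteq> carrier G"
    and exps: "\<forall>h\<in>F. \<exists>m::nat. m > 0 \<and> conj_pow_pm G g (int m) h"
  shows "\<exists>P::nat. P > 0 \<and> (\<forall>h\<in>F. conj_pow_pm G g (int P) h)"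
proof -
  obtain m where m: "\<forall>h\<in>F. m h > 0 \<and> conj_pow_pm G g (int (m h)) h"
    using bchoice[OF exps] by blast
  define P where "P = (\<Prod>h\<in>F. m h)"
  have "conj_pow_pm G g (int P) h" if h: "h \<in> F" for h
  proof -
    obtain r where "P = m h * r"
      using dvd_prodI[OF F(1) h, of m] unfolding P_def by blast
    then have "int P = int (m h) * int r"
      by simp
    then show ?thesis
      using conj_pow_pm_multiple[OF g _, of h "int (m h)" "int r"] m h F(2) by auto
  qed
  moreover have "P > 0"
    unfolding P_def using m by (intro prod_pos) auto
  ultimately show ?thesis by blast
qed

lemma conj_pow_pm_commute:
  assumes g: "g \<in> carrier G" and k: "k \<in> carrier G" and pm: "conj_pow_pm G g m k"
  shows "\<exists>n'. k \<otimes> g [^] (m * n) = g [^] (m * n') \<otimes> k"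
proof -
  have "k \<otimes> g [^] (m * n) \<otimes> inv k \<in> {g [^] (m * n), g [^] (m * - n)}"
    using conj_pow_pm_multiple[OF g k pm, of n] unfolding conj_pow_pm_def by simp
  then obtain n' where n': "k \<otimes> g [^] (m * n) \<otimes> inv k = g [^] (m * n')"
    by blast
  have "k \<otimes> g [^] (m * n) = (k \<otimes> g [^] (m * n) \<otimes> inv k) \<otimes> k"
    using g k by (simp add: m_assoc)
  then show ?thesis
    using n' by auto
qed

text \<open>Since \<open>K\<close> conjugates \<open>g\<^sup>M\<close> to \<open>g\<^sup>\<plusminus>\<^sup>M\<close>, powers of \<open>g\<^sup>M\<close> can be moved past elements of \<open>K\<close>.\<close>

lemma generate_pow_subgroup_normal_form:
  assumes g: "g \<in> carrier G" and K: "subgroup K G"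
    and pm: "\<forall>k\<in>K. conj_pow_pm G g (int M) k"
    and u: "u \<in> generate G ({g [^] M} \<union> K)"
  shows "\<exists>i::int. \<exists>k\<in>K. u = g [^] (int M * i) \<otimes> k"
  using u
proof (induction rule: generate.induct)
  case one
  show ?case
    using subgroup.one_closed[OF K] g by (intro exI[of _ 0] bexI[of _ \<one>]) auto
next
  case (incl h)
  then consider "h = g [^] M" | "h \<in> K" by blast
  then show ?case
  proof cases
    case 1
    then have "h = g [^] (int M * 1) \<otimes> \<one>" using g by (simp add: int_pow_int)
    then show ?thesis using subgroup.one_closed[OF K] by blast
  next
    case 2
    then have "h = g [^] (int M * 0) \<otimes> h" using subgroup.subset[OF K] by auto
    then show ?thesis using 2 by blast
  qed
next
  case (inv h)
  then consider "h = g [^] M" | "h \<in> K" by blast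
  then show ?case
  proof cases
    case 1
    then have "inv h = g [^] (int M * -1) \<otimes> \<one>"
      using g int_pow_neg_int[OF g, of M] by simp
    then show ?thesis using subgroup.one_closed[OF K] by blast
  next
    case 2
    then have "inv h = g [^] (int M * 0) \<otimes> inv h" using subgroup.subset[OF K] by auto
    then show ?thesis using 2 subgroup.m_inv_closed[OF K] by blast
  qed
next
  case (eng h1 h2)
  obtain i k where ik: "k \<in> K" "h1 = g [^] (int M * i) \<otimes> k" using eng by blast
  obtain j k' where jk: "k' \<in> K" "h2 = g [^] (int M * j) \<otimes> k'" using eng by blast
  have kc: "k \<in> carrier G" "k' \<in> carrier G" using ik jk subgroup.subset[OF K] by auto
  obtain j' where j': "k \<otimes> g [^] (int M * j) = g [^] (int M * j') \<otimes> k"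
    using conj_pow_pm_commute[OF g kc(1)] pm ik(1) by blast
  have "h1 \<otimes> h2 = g [^] (int M * i) \<otimes> (k \<otimes> g [^] (int M * j)) \<otimes> k'"
    using ik jk kc g by (simp add: m_assoc)
  also have "\<dots> = g [^] (int M * i) \<otimes> g [^] (int M * j') \<otimes> (k \<otimes> k')"
    using j' kc g by (simp add: m_assoc)
  also have "\<dots> = g [^] (int M * (i + j')) \<otimes> (k \<otimes> k')"
    using int_pow_mult[OF g] by (simp add: distrib_left)
  finally show ?case
    using subgroup.m_closed[OF K ik(1) jk(1)] by blast
qed

lemma generate_pow_subgroup_outside:
  assumes g: "g \<in> carrier G" and K: "subgroup K G"
    and pm: "\<forall>k\<in>K. conj_pow_pm G g (int M) k"
    and u: "u \<in> generate G ({g [^] M} \<union> K) - K"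
  shows "\<exists>i::int. i \<noteq> 0 \<and> (\<exists>k\<in>K. u = g [^] (int M * i) \<otimes> k)"
proof -
  obtain i k where ik: "k \<in> K" "u = g [^] (int M * i) \<otimes> k"
    using generate_pow_subgroup_normal_form[OF g K pm] u by blast
  moreover have "i \<noteq> 0"
    using u ik subgroup.subset[OF K] by auto
  ultimately show ?thesis
    by blast
qed

end

lemma int_seq_crosses_upward:
  fixes f :: "nat \<Rightarrow> int"
  assumes "f 0 \<le> i" "J \<ge> 0" "\<forall>k<N. \<bar>f (Suc k) - f k\<bar> \<le> J"
  shows "(\<exists>k\<le>N. \<bar>f k - i\<bar> \<le> J) \<or> (\<forall>k\<le>N. f k < i)"
  using assms(3)
proof (induction N)
  case 0
  then show ?case using assms(1,2) by (cases "f 0 = i") auto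
next
  case (Suc N)
  then have IH: "(\<exists>k\<le>N. \<bar>f k - i\<bar> \<le> J) \<or> (\<forall>k\<le>N. f k < i)" by simp
  show ?case
  proof (cases "\<exists>k\<le>N. \<bar>f k - i\<bar> \<le> J")
    case True
    then show ?thesis by (meson le_Suc_eq)
  next
    case False
    then have below: "\<forall>k\<le>N. f k < i" using IH by blast
    show ?thesis
    proof (cases "f (Suc N) < i")
      case True
      then show ?thesis using below le_Suc_eq by auto
    next
      case False
      have "f (Suc N) \<le> f N + J" using Suc.prems by auto
      then have "\<bar>f (Suc N) - i\<bar> \<le> J" using False below by auto
      then show ?thesis by blast
    qed
  qed
qed

lemma int_seq_intermediate_value:
  fixes f :: "nat \<Rightarrow> int"
  assumes "min (f 0) (f N) \<le> i" "i \<le> max (f 0) (f N)" "J \<ge> 0"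
    and "\<forall>k<N. \<bar>f (Suc k) - f k\<bar> \<le> J"
  shows "\<exists>k\<le>N. \<bar>f k - i\<bar> \<le> J"
proof (cases "f 0 \<le> f N")
  case True
  then have "f 0 \<le> i" "i \<le> f N" using assms(1,2) by auto
  moreover have "\<not> (\<forall>k\<le>N. f k < i)"
    using \<open>i \<le> f N\<close> by (metis le_refl not_less)
  ultimately show ?thesis
    using int_seq_crosses_upward[OF _ assms(3,4)] by blast
next
  case False
  then have "- f 0 \<le> - i" "- i \<le> - f N" using assms(1,2) by auto
  moreover have "\<forall>k<N. \<bar>- f (Suc k) - - f k\<bar> \<le> J"
    using assms(4) by (simp add: abs_minus_commute)
  moreover have "\<not> (\<forall>k\<le>N. - f k < - i)"
    using \<open>- i \<le> - f N\<close> by (metis le_refl not_less)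
  ultimately obtain k where "k \<le> N" "\<bar>- f k - - i\<bar> \<le> J"
    using int_seq_crosses_upward[of "\<lambda>k. - f k" "- i" J N] assms(3) by blast
  then show ?thesis
    by (auto simp: abs_minus_commute)
qed

section \<open>Constricting maps\<close>

lemma constricting_map_in:
  "constricting_map \<Gamma> \<delta> B p \<Longrightarrow> p x \<in> B"
  unfolding constricting_map_def by auto

lemma constricting_map_near:
  "constricting_map \<Gamma> \<delta> B p \<Longrightarrow> x \<in> B \<Longrightarrow> dist x (p x) \<le> \<delta>"
  unfolding constricting_map_def by auto

lemma constricting_map_path:
  assumes "constricting_map \<Gamma> \<delta> B p" "(a, b, \<alpha>) \<in> \<Gamma>" "dist (p (\<alpha> a)) (p (\<alpha> b)) > \<delta>"
  shows "\<exists>t\<in>{a..b}. dist (\<alpha> t) (p (\<alpha> a)) \<le> \<delta>"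
    and "\<exists>t\<in>{a..b}. dist (\<alpha> t) (p (\<alpha> b)) \<le> \<delta>"
proof -
  have "joins (a, b, \<alpha>) (\<alpha> a) (\<alpha> b)"
    unfolding joins_def by simp
  then have "path_image (a, b, \<alpha>) \<inter> cball (p (\<alpha> a)) \<delta> \<noteq> {}"
    and "path_image (a, b, \<alpha>) \<inter> cball (p (\<alpha> b)) \<delta> \<noteq> {}"
    using assms unfolding constricting_map_def by blast+
  then show "\<exists>t\<in>{a..b}. dist (\<alpha> t) (p (\<alpha> a)) \<le> \<delta>"
    and "\<exists>t\<in>{a..b}. dist (\<alpha> t) (p (\<alpha> b)) \<le> \<delta>"
    unfolding path_image_def by (auto simp: dist_commute)
qed

text \<open>Library \<open>hausdorff_distance\<close> is only meaningful for bounded sets, and \<open>A\<close> is unbounded.\<close>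

definition hausdorff_close :: "real \<Rightarrow> 'x::metric_space set \<Rightarrow> 'x set \<Rightarrow> bool" where
  "hausdorff_close r X Y \<longleftrightarrow> (\<forall>x\<in>X. \<exists>y\<in>Y. dist x y \<le> r) \<and> (\<forall>y\<in>Y. \<exists>x\<in>X. dist x y \<le> r)"

lemma hausdorff_close_refl: "hausdorff_close 0 X X"
  unfolding hausdorff_close_def by auto

lemma hausdorff_close_sym: "hausdorff_close r X Y \<Longrightarrow> hausdorff_close r Y X"
  unfolding hausdorff_close_def by (auto simp: dist_commute)

lemma hausdorff_close_trans:
  assumes "hausdorff_close r X Y" "hausdorff_close s Y Z"
  shows "hausdorff_close (r + s) X Z"
  unfolding hausdorff_close_def
proof (intro conjI ballI)
  fix x assume "x \<in> X"
  then obtain y z where "y \<in> Y" "dist x y \<le> r" "z \<in> Z" "dist y z \<le> s"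
    using assms unfolding hausdorff_close_def by meson
  then show "\<exists>z\<in>Z. dist x z \<le> r + s"
    using dist_triangle[of x z y] by force
next
  fix z assume "z \<in> Z"
  then obtain y x where "y \<in> Y" "dist y z \<le> s" "x \<in> X" "dist x y \<le> r"
    using assms unfolding hausdorff_close_def by meson
  then show "\<exists>x\<in>X. dist x z \<le> r + s"
    using dist_triangle[of x z y] by force
qed

lemma proj_dist_ge:
  assumes "Y \<noteq> {}" "Z \<noteq> {}" "\<forall>y\<in>Y. \<forall>z\<in>Z. b \<le> dist (p y) (p z)"
  shows "b \<le> proj_dist p Y Z"
  unfolding proj_dist_def using assms by (intro cInf_greatest) auto

section \<open>Paths and the orbit of \<open>g\<close>\<close>

locale constricting_setting =
  fixes G :: "('g, 'm) monoid_scheme" (structure)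
    and \<phi> :: "'g \<Rightarrow> 'x::metric_space \<Rightarrow> 'x"
    and \<Gamma> :: "'x pth set" and \<mu> \<nu> \<delta> :: real and g :: 'g and A :: "'x set" and \<pi> :: "'x \<Rightarrow> 'x"
  assumes path_system: "path_system_group \<mu> \<nu> G \<phi> \<Gamma>"
    and constricting: "constricting_element G \<phi> \<Gamma> \<delta> g A \<pi>"
begin

lemma action: "group_action G UNIV \<phi>"
  using path_system unfolding path_system_group_def by auto

sublocale group G
  using action unfolding group_action_def group_hom_def by auto

lemma act_mult: "h \<in> carrier G \<Longrightarrow> k \<in> carrier G \<Longrightarrow> \<phi> (h \<otimes> k) x = \<phi> h (\<phi> k x)"
  using group_action.composition_rule[OF action] by auto

lemma act_one: "\<phi> \<one> x = x"
  using group_action.id_eq_one[OF action] by (metis restrict_apply' UNIV_I)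

lemma act_inv_left [simp]: "h \<in> carrier G \<Longrightarrow> \<phi> (inv h) (\<phi> h x) = x"
  by (metis act_mult act_one inv_closed l_inv)

lemma act_inv_right [simp]: "h \<in> carrier G \<Longrightarrow> \<phi> h (\<phi> (inv h) x) = x"
  by (metis act_mult act_one inv_closed r_inv)

lemma dist_act [simp]: "h \<in> carrier G \<Longrightarrow> dist (\<phi> h x) (\<phi> h y) = dist x y"
  using path_system unfolding path_system_group_def by auto

lemma finite_small_displacement: "finite {h \<in> carrier G. dist x (\<phi> h x) \<le> r}"
proof -
  have "{h \<in> carrier G. dist x (\<phi> h x) \<le> r}
        \<subseteq> {h \<in> carrier G. \<exists>y. dist x y \<le> r \<and> dist x (\<phi> h y) \<le> r}"
  proof
    fix h assume h: "h \<in> {h \<in> carrier G. dist x (\<phi> h x) \<le> r}"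
    then have "dist x x \<le> r"
      using order_trans[OF zero_le_dist[of x "\<phi> h x"]] by auto
    with h show "h \<in> {h \<in> carrier G. \<exists>y. dist x y \<le> r \<and> dist x (\<phi> h y) \<le> r}"
      by blast
  qed
  moreover have "finite {h \<in> carrier G. \<exists>y. dist x y \<le> r \<and> dist x (\<phi> h y) \<le> r}"
    using path_system unfolding path_system_group_def proper_action_def by auto
  ultimately show ?thesis
    using finite_subset by blast
qed

lemma path_between: "\<exists>a b \<alpha>. (a, b, \<alpha>) \<in> \<Gamma> \<and> a \<le> b \<and> \<alpha> a = x \<and> \<alpha> b = y"
proof -
  obtain a b \<alpha> where P: "(a, b, \<alpha>) \<in> \<Gamma>" "joins (a, b, \<alpha>) x y"
    using path_system unfolding path_system_group_def by (metis prod_cases3)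
  then have "arc_path (a, b, \<alpha>)"
    using path_system unfolding path_system_group_def by auto
  then show ?thesis
    using P unfolding arc_path_def joins_def by auto
qed

lemma path_quasi_geodesic:
  assumes "(a, b, \<alpha>) \<in> \<Gamma>" "s \<in> {a..b}" "t \<in> {a..b}"
  shows "dist (\<alpha> s) (\<alpha> t) \<le> \<bar>s - t\<bar>" "\<bar>s - t\<bar> \<le> \<mu> * dist (\<alpha> s) (\<alpha> t) + \<nu>"
proof -
  have "quasi_geodesic \<mu> \<nu> (a, b, \<alpha>)"
    using assms(1) path_system unfolding path_system_group_def by auto
  then show "dist (\<alpha> s) (\<alpha> t) \<le> \<bar>s - t\<bar>" "\<bar>s - t\<bar> \<le> \<mu> * dist (\<alpha> s) (\<alpha> t) + \<nu>"
    using assms(2,3) unfolding quasi_geodesic_def by auto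
qed

lemma subpath:
  "(a, b, \<alpha>) \<in> \<Gamma> \<Longrightarrow> a \<le> a' \<Longrightarrow> a' \<le> b' \<Longrightarrow> b' \<le> b \<Longrightarrow> (a', b', \<alpha>) \<in> \<Gamma>"
  using path_system unfolding path_system_group_def by fast

lemma translate_path: "h \<in> carrier G \<Longrightarrow> (a, b, \<alpha>) \<in> \<Gamma> \<Longrightarrow> (a, b, \<phi> h \<circ> \<alpha>) \<in> \<Gamma>"
  using path_system unfolding path_system_group_def by fast

lemma nu_nonneg: "\<nu> \<ge> 0"
proof -
  obtain a b \<alpha> where "(a, b, \<alpha>) \<in> \<Gamma>" "a \<le> b"
    using path_between by blast
  then show ?thesis
    using path_quasi_geodesic(2)[of a b \<alpha> a a] by auto
qed

lemma proj_constricting: "constricting_map \<Gamma> \<delta> A \<pi>"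
  using constricting unfolding constricting_element_def by auto

lemma proj_in_A: "\<pi> x \<in> A"
  using constricting_map_in[OF proj_constricting] .

lemma g_carrier: "g \<in> carrier G"
  using constricting unfolding constricting_element_def by auto

lemma g_infinite_order: "\<forall>n::nat. n > 0 \<longrightarrow> g [^] n \<noteq> \<one>"
  using constricting unfolding constricting_element_def by auto

lemma g_pow_eq_iff: "g [^] (i::int) = g [^] j \<longleftrightarrow> i = j"
  using int_pow_eq_iff_of_infinite_order[OF g_carrier g_infinite_order] .

lemma A_invariant: "\<phi> (g [^] (n::int)) ` A = A"
  using constricting unfolding constricting_element_def by auto

lemma delta_nonneg: "\<delta> \<ge> 0"
  using constricting_map_near[OF proj_constricting proj_in_A, of undefined]
  by (meson zero_le_dist order_trans)

definition x0 :: 'x where "x0 = (SOME x. x \<in> A)"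

definition orb :: "int \<Rightarrow> 'x" where "orb n = \<phi> (g [^] n) x0"

lemma x0_in_A: "x0 \<in> A"
  unfolding x0_def using proj_in_A by (metis someI)

lemma orb_in_A: "orb n \<in> A"
  using A_invariant[of n] x0_in_A unfolding orb_def by blast

lemma orb_zero [simp]: "orb 0 = x0"
  unfolding orb_def by (simp add: act_one)

lemma A_near_orb: "a \<in> A \<Longrightarrow> \<exists>n. dist (orb n) a \<le> \<delta>"
  using constricting x0_in_A unfolding constricting_element_def orb_def by blast

lemma dist_orb: "dist (orb m) (orb n) = dist x0 (orb (n - m))"
proof -
  have "dist (orb m) (orb n) = dist (\<phi> (inv (g [^] m)) (orb m)) (\<phi> (inv (g [^] m)) (orb n))"
    using g_carrier by simp
  also have "\<phi> (inv (g [^] m)) (orb m) = x0"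
    unfolding orb_def using g_carrier by simp
  also have "\<phi> (inv (g [^] m)) (orb n) = orb (n - m)"
    unfolding orb_def using g_carrier act_mult[symmetric] int_pow_mult[of g "-m" n] int_pow_neg[of g m]
    by simp
  finally show ?thesis .
qed

text \<open>Properness and the infinite order of \<open>g\<close> make the orbit map \<open>n \<mapsto> g\<^sup>n x0\<close> proper.\<close>

lemma orb_index_bound: "\<exists>B::nat. \<forall>n. dist x0 (orb n) \<le> r \<longrightarrow> \<bar>n\<bar> \<le> int B"
proof -
  let ?S = "{n::int. dist x0 (orb n) \<le> r}"
  have "inj_on (\<lambda>n. g [^] n) ?S"
    using g_pow_eq_iff by (auto simp: inj_on_def)
  moreover have "(\<lambda>n. g [^] n) ` ?S \<subseteq> {h \<in> carrier G. dist x0 (\<phi> h x0) \<le> r}"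
    using g_carrier unfolding orb_def by auto
  ultimately have "finite ?S"
    using finite_small_displacement finite_imageD finite_subset by blast
  define B where "B = Max (insert 0 (abs ` ?S))"
  have "\<forall>n\<in>?S. \<bar>n\<bar> \<le> B" "B \<ge> 0"
    using \<open>finite ?S\<close> unfolding B_def by auto
  then have "\<forall>n. dist x0 (orb n) \<le> r \<longrightarrow> \<bar>n\<bar> \<le> int (nat B)"
    by auto
  then show ?thesis
    by blast
qed

lemma orb_far: "\<exists>N::nat. \<forall>n. \<bar>n\<bar> \<ge> int N \<longrightarrow> dist x0 (orb n) > r"
proof -
  obtain B where B: "\<forall>n. dist x0 (orb n) \<le> r \<longrightarrow> \<bar>n\<bar> \<le> int B"
    using orb_index_bound by blast
  have "dist x0 (orb n) > r" if "\<bar>n\<bar> \<ge> int (B + 1)" for n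
    using B[rule_format, of n] that by linarith
  then have "\<forall>n. \<bar>n\<bar> \<ge> int (B + 1) \<longrightarrow> dist x0 (orb n) > r"
    by blast
  then show ?thesis
    by blast
qed

lemma mu_ge_1: "\<mu> \<ge> 1"
proof (rule ccontr)
  assume "\<not> \<mu> \<ge> 1"
  then have pos: "1 - \<mu> > 0" by simp
  obtain N where N: "\<forall>n. \<bar>n\<bar> \<ge> int N \<longrightarrow> dist x0 (orb n) > \<nu> / (1 - \<mu>)"
    using orb_far by blast
  let ?d = "dist x0 (orb (int N))"
  obtain a b \<alpha> where P: "(a, b, \<alpha>) \<in> \<Gamma>" "a \<le> b" "\<alpha> a = x0" "\<alpha> b = orb (int N)"
    using path_between by blast
  then have "?d \<le> b - a" "b - a \<le> \<mu> * ?d + \<nu>"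
    using path_quasi_geodesic[OF P(1), of a b] by auto
  then have "?d \<le> \<nu> / (1 - \<mu>)"
    using pos by (simp add: field_simps)
  then show False
    using N[rule_format, of "int N"] by simp
qed

definition lip :: "real \<Rightarrow> real" where "lip c = \<mu> * c + \<nu> + 2 * \<delta>"

definition proj_err :: "real \<Rightarrow> real" where "proj_err c = c + lip c + \<delta>"

lemma lip_mono: "c \<le> c' \<Longrightarrow> lip c \<le> lip c'"
  unfolding lip_def using mu_ge_1 by (simp add: mult_left_mono)

lemma lip_ge: "c \<ge> 0 \<Longrightarrow> lip c \<ge> 2 * \<delta>"
  unfolding lip_def using mu_ge_1 nu_nonneg by simp

lemma proj_err_nonneg: "c \<ge> 0 \<Longrightarrow> proj_err c \<ge> 0"
  unfolding proj_err_def using lip_ge[of c] delta_nonneg by linarith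

lemma path_param_bound:
  assumes "(a, b, \<alpha>) \<in> \<Gamma>" "s \<in> {a..b}" "t \<in> {a..b}" "dist (\<alpha> s) (\<alpha> t) \<le> D"
  shows "\<bar>s - t\<bar> \<le> \<mu> * D + \<nu>"
proof -
  have "\<mu> * dist (\<alpha> s) (\<alpha> t) \<le> \<mu> * D"
    using assms(4) mu_ge_1 by (simp add: mult_left_mono)
  then show ?thesis
    using path_quasi_geodesic(2)[OF assms(1-3)] by linarith
qed

lemma path_point_near:
  assumes "(a, b, \<alpha>) \<in> \<Gamma>" "s \<in> {a..b}" "s' \<in> {a..b}" "t \<in> {a..b}"
    and "\<bar>t - s\<bar> \<le> \<bar>s' - s\<bar>" "dist (\<alpha> s) (\<alpha> s') \<le> D"
  shows "dist (\<alpha> t) (\<alpha> s) \<le> \<mu> * D + \<nu>"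
  using path_quasi_geodesic(1)[OF assms(1,4,2)] path_param_bound[OF assms(1,2,3,6)] assms(5)
  by (simp add: abs_minus_commute)

lemma constricting_map_lipschitz:
  assumes p: "constricting_map \<Gamma> \<delta> B p"
  shows "dist (p x) (p y) \<le> lip (dist x y)"
proof (cases "dist (p x) (p y) > \<delta>")
  case False
  then show ?thesis
    using lip_ge[of "dist x y"] delta_nonneg by simp
next
  case True
  obtain a b \<alpha> where P: "(a, b, \<alpha>) \<in> \<Gamma>" "a \<le> b" "\<alpha> a = x" "\<alpha> b = y"
    using path_between by blast
  obtain t1 t2 where t: "t1 \<in> {a..b}" "t2 \<in> {a..b}"
    "dist (\<alpha> t1) (p x) \<le> \<delta>" "dist (\<alpha> t2) (p y) \<le> \<delta>"
    using constricting_map_path[OF p P(1)] P True by auto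
  have "dist (\<alpha> t1) (\<alpha> t2) \<le> \<bar>t1 - t2\<bar>"
    using path_quasi_geodesic(1)[OF P(1) t(1,2)] .
  also have "\<dots> \<le> \<bar>a - b\<bar>"
    using t by auto
  also have "\<dots> \<le> \<mu> * dist x y + \<nu>"
    using path_quasi_geodesic(2)[OF P(1), of a b] P by auto
  finally have "dist (\<alpha> t1) (\<alpha> t2) \<le> \<mu> * dist x y + \<nu>" .
  moreover have "dist (p x) (p y) \<le> dist (\<alpha> t1) (p x) + dist (\<alpha> t1) (\<alpha> t2) + dist (\<alpha> t2) (p y)"
    using dist_triangle[of "p x" "p y" "\<alpha> t1"] dist_triangle[of "\<alpha> t1" "p y" "\<alpha> t2"]
    by (simp add: dist_commute)
  ultimately show ?thesis
    using t unfolding lip_def by linarith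
qed

lemma constricting_map_dist_le:
  assumes p: "constricting_map \<Gamma> \<delta> B p" and b: "b \<in> B" "dist x b \<le> c"
  shows "dist x (p x) \<le> proj_err c"
proof -
  have "dist (p x) (p b) \<le> lip c"
    using constricting_map_lipschitz[OF p, of x b] lip_mono[OF b(2)] by linarith
  moreover have "dist b (p b) \<le> \<delta>"
    using constricting_map_near[OF p b(1)] .
  moreover have "dist x (p x) \<le> dist x b + dist b (p b) + dist (p b) (p x)"
    using dist_triangle[of x "p x" b] dist_triangle[of b "p x" "p b"] by linarith
  ultimately show ?thesis
    using b unfolding proj_err_def by (simp add: dist_commute)
qed

lemma constricting_map_near_on_close_set:
  assumes p: "constricting_map \<Gamma> \<delta> B p" and BX: "hausdorff_close R B X" and q: "q \<in> X"
  shows "dist q (p q) \<le> proj_err R"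
proof -
  obtain b where "b \<in> B" "dist q b \<le> R"
    using BX q unfolding hausdorff_close_def by (auto simp: dist_commute)
  then show ?thesis
    using constricting_map_dist_le[OF p] by blast
qed

lemma constricting_map_translate:
  assumes u: "u \<in> carrier G" and p: "constricting_map \<Gamma> \<delta> B p"
  shows "constricting_map \<Gamma> \<delta> (\<phi> u ` B) (\<lambda>y. \<phi> u (p (\<phi> (inv u) y)))"
  unfolding constricting_map_def
proof (intro conjI allI ballI impI)
  show "range (\<lambda>y. \<phi> u (p (\<phi> (inv u) y))) \<subseteq> \<phi> u ` B"
    using constricting_map_in[OF p] by auto
next
  fix x assume "x \<in> \<phi> u ` B"
  then obtain b where "b \<in> B" "x = \<phi> u b" by blast
  then show "dist x (\<phi> u (p (\<phi> (inv u) x))) \<le> \<delta>"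
    using constricting_map_near[OF p] u by simp
next
  fix x y P
  assume P: "P \<in> \<Gamma>" and far: "joins P x y \<and> \<delta> < dist (\<phi> u (p (\<phi> (inv u) x))) (\<phi> u (p (\<phi> (inv u) y)))"
  obtain a b \<alpha> where P_eq: "P = (a, b, \<alpha>)" by (cases P) auto
  let ?\<beta> = "\<phi> (inv u) \<circ> \<alpha>"
  have \<beta>: "(a, b, ?\<beta>) \<in> \<Gamma>"
    using translate_path[OF inv_closed[OF u]] P P_eq by simp
  have ends: "?\<beta> a = \<phi> (inv u) x" "?\<beta> b = \<phi> (inv u) y"
    using far P_eq unfolding joins_def by auto
  have "dist (p (?\<beta> a)) (p (?\<beta> b)) > \<delta>"
    using far ends u by simp
  from constricting_map_path[OF p \<beta> this] ends
  obtain s t where "s \<in> {a..b}" "dist (?\<beta> s) (p (\<phi> (inv u) x)) \<le> \<delta>"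
    and "t \<in> {a..b}" "dist (?\<beta> t) (p (\<phi> (inv u) y)) \<le> \<delta>"
    by auto
  then have "\<alpha> s \<in> cball (\<phi> u (p (\<phi> (inv u) x))) \<delta>" "\<alpha> t \<in> cball (\<phi> u (p (\<phi> (inv u) y))) \<delta>"
    using dist_act[OF u, of "\<phi> (inv u) (\<alpha> s)"] dist_act[OF u, of "\<phi> (inv u) (\<alpha> t)"] u
    by (auto simp: dist_commute)
  moreover have "\<alpha> s \<in> path_image P" "\<alpha> t \<in> path_image P"
    using \<open>s \<in> {a..b}\<close> \<open>t \<in> {a..b}\<close> unfolding P_eq path_image_def by auto
  ultimately show "path_image P \<inter> cball (\<phi> u (p (\<phi> (inv u) x))) \<delta> \<noteq> {}"
    and "path_image P \<inter> cball (\<phi> u (p (\<phi> (inv u) y))) \<delta> \<noteq> {}"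
    by blast+
qed

lemma proj_middle_near:
  assumes P: "(a, b, \<alpha>) \<in> \<Gamma>" and t: "a \<le> t" "t \<le> b"
    and far1: "dist (\<pi> (\<alpha> a)) (\<pi> (\<alpha> t)) > \<delta>" and far2: "dist (\<pi> (\<alpha> t)) (\<pi> (\<alpha> b)) > \<delta>"
  shows "dist (\<alpha> t) (\<pi> (\<alpha> t)) \<le> 2 * \<mu> * \<delta> + \<nu> + \<delta>"
proof -
  obtain s where s: "s \<in> {a..t}" "dist (\<alpha> s) (\<pi> (\<alpha> t)) \<le> \<delta>"
    using constricting_map_path(2)[OF proj_constricting subpath[OF P order_refl t] far1] by auto
  obtain s' where s': "s' \<in> {t..b}" "dist (\<alpha> s') (\<pi> (\<alpha> t)) \<le> \<delta>"
    using constricting_map_path(1)[OF proj_constricting subpath[OF P t order_refl] far2] by auto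
  have "dist (\<alpha> s) (\<alpha> s') \<le> 2 * \<delta>"
    using s s' dist_triangle[of "\<alpha> s" "\<alpha> s'" "\<pi> (\<alpha> t)"] by (simp add: dist_commute)
  then have "dist (\<alpha> t) (\<alpha> s) \<le> \<mu> * (2 * \<delta>) + \<nu>"
    using path_point_near[OF P, of s s' t] s s' t by auto
  then show ?thesis
    using s dist_triangle[of "\<alpha> t" "\<pi> (\<alpha> t)" "\<alpha> s"] by simp
qed

definition qc_err :: "real \<Rightarrow> real" where
  "qc_err c = (2 * \<mu> * \<delta> + \<nu> + \<delta>) + \<mu> * (2 * proj_err c + 2 * \<delta>) + \<nu> + c"

lemma le_qc_err:
  assumes "c \<ge> 0"
  shows "2 * \<mu> * \<delta> + \<nu> + \<delta> \<le> qc_err c"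
    and "\<mu> * (2 * \<delta> + proj_err c) + \<nu> + c \<le> qc_err c"
    and "\<mu> * (2 * proj_err c + 2 * \<delta>) + \<nu> + c \<le> qc_err c"
    and "c \<le> qc_err c"
proof -
  have \<mu>: "\<mu> \<ge> 0" using mu_ge_1 by simp
  have nonneg: "0 \<le> 2 * \<mu> * \<delta> + \<nu> + \<delta>" "0 \<le> \<mu> * (2 * proj_err c + 2 * \<delta>)"
    using \<mu> nu_nonneg delta_nonneg proj_err_nonneg[OF assms] by simp_all
  have "\<mu> * (2 * \<delta> + proj_err c) \<le> \<mu> * (2 * proj_err c + 2 * \<delta>)"
    using \<mu> proj_err_nonneg[OF assms] by (simp add: mult_left_mono)
  then show "2 * \<mu> * \<delta> + \<nu> + \<delta> \<le> qc_err c"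
    and "\<mu> * (2 * \<delta> + proj_err c) + \<nu> + c \<le> qc_err c"
    and "\<mu> * (2 * proj_err c + 2 * \<delta>) + \<nu> + c \<le> qc_err c"
    and "c \<le> qc_err c"
    using nonneg nu_nonneg assms unfolding qc_err_def by linarith+
qed

text \<open>Quasi-convexity of \<open>A\<close>: either the middle point \<open>z\<close> projects far from both ends, or its
  projection is close to one end's, and then a path point near \<open>\<pi> z\<close> traps \<open>z\<close> close to that end.\<close>

lemma path_near_A:
  assumes P: "(a, b, \<alpha>) \<in> \<Gamma>" and ab: "a \<le> b" and c: "c \<ge> 0"
    and p: "p \<in> A" "dist (\<alpha> a) p \<le> c" and q: "q \<in> A" "dist (\<alpha> b) q \<le> c"
    and t: "t \<in> {a..b}"
  shows "\<exists>z\<in>A. dist (\<alpha> t) z \<le> qc_err c"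
proof -
  let ?x = "\<alpha> a" and ?y = "\<alpha> b" and ?z = "\<alpha> t"
  have ex: "dist ?x (\<pi> ?x) \<le> proj_err c"
    using constricting_map_dist_le[OF proj_constricting p] .
  have ey: "dist ?y (\<pi> ?y) \<le> proj_err c"
    using constricting_map_dist_le[OF proj_constricting q] .
  have ends: "a \<in> {a..b}" "b \<in> {a..b}" using ab by auto
  have t': "a \<le> t" "t \<le> b" using t by auto
  consider "dist (\<pi> ?x) (\<pi> ?z) > \<delta>" "dist (\<pi> ?z) (\<pi> ?y) > \<delta>"
    | "dist (\<pi> ?x) (\<pi> ?z) > \<delta>" "dist (\<pi> ?z) (\<pi> ?y) \<le> \<delta>"
    | "dist (\<pi> ?x) (\<pi> ?z) \<le> \<delta>" "dist (\<pi> ?z) (\<pi> ?y) > \<delta>"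
    | "dist (\<pi> ?x) (\<pi> ?z) \<le> \<delta>" "dist (\<pi> ?z) (\<pi> ?y) \<le> \<delta>"
    by linarith
  then show ?thesis
  proof cases
    case 1
    then have "dist ?z (\<pi> ?z) \<le> 2 * \<mu> * \<delta> + \<nu> + \<delta>"
      using proj_middle_near[OF P] t by auto
    then show ?thesis
      using proj_in_A le_qc_err(1)[OF c] by (meson order_trans)
  next
    case 2
    obtain s where s: "s \<in> {a..t}" "dist (\<alpha> s) (\<pi> ?z) \<le> \<delta>"
      using constricting_map_path(2)[OF proj_constricting subpath[OF P order_refl t'] 2(1)] by auto
    have "dist (\<alpha> s) ?y \<le> dist (\<alpha> s) (\<pi> ?z) + dist (\<pi> ?z) (\<pi> ?y) + dist (\<pi> ?y) ?y"
      using dist_triangle[of "\<alpha> s" ?y "\<pi> ?z"] dist_triangle[of "\<pi> ?z" ?y "\<pi> ?y"] by linarith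
    then have "dist ?y (\<alpha> s) \<le> 2 * \<delta> + proj_err c"
      using s 2(2) ey by (simp add: dist_commute)
    then have "dist ?z ?y \<le> \<mu> * (2 * \<delta> + proj_err c) + \<nu>"
      using path_point_near[OF P ends(2), of s t] s t by auto
    then have "dist ?z q \<le> \<mu> * (2 * \<delta> + proj_err c) + \<nu> + c"
      using q dist_triangle[of ?z q ?y] by linarith
    then show ?thesis
      using q le_qc_err(2)[OF c] by (meson order_trans)
  next
    case 3
    obtain s where s: "s \<in> {t..b}" "dist (\<alpha> s) (\<pi> ?z) \<le> \<delta>"
      using constricting_map_path(1)[OF proj_constricting subpath[OF P t' order_refl] 3(2)] by auto
    have "dist (\<alpha> s) ?x \<le> dist (\<alpha> s) (\<pi> ?z) + dist (\<pi> ?z) (\<pi> ?x) + dist (\<pi> ?x) ?x"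
      using dist_triangle[of "\<alpha> s" ?x "\<pi> ?z"] dist_triangle[of "\<pi> ?z" ?x "\<pi> ?x"] by linarith
    then have "dist ?x (\<alpha> s) \<le> 2 * \<delta> + proj_err c"
      using s 3(1) ex by (simp add: dist_commute)
    then have "dist ?z ?x \<le> \<mu> * (2 * \<delta> + proj_err c) + \<nu>"
      using path_point_near[OF P ends(1), of s t] s t by auto
    then have "dist ?z p \<le> \<mu> * (2 * \<delta> + proj_err c) + \<nu> + c"
      using p dist_triangle[of ?z p ?x] by linarith
    then show ?thesis
      using p le_qc_err(2)[OF c] by (meson order_trans)
  next
    case 4
    have "dist ?x ?y \<le> dist ?x (\<pi> ?x) + dist (\<pi> ?x) (\<pi> ?z) + dist (\<pi> ?z) (\<pi> ?y) + dist (\<pi> ?y) ?y"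
      using dist_triangle[of ?x ?y "\<pi> ?x"] dist_triangle[of "\<pi> ?x" ?y "\<pi> ?z"]
        dist_triangle[of "\<pi> ?z" ?y "\<pi> ?y"] by linarith
    then have "dist ?x ?y \<le> 2 * proj_err c + 2 * \<delta>"
      using ex ey 4 by (simp add: dist_commute)
    then have "dist ?z ?x \<le> \<mu> * (2 * proj_err c + 2 * \<delta>) + \<nu>"
      using path_point_near[OF P ends, of t] t by auto
    then have "dist ?z p \<le> \<mu> * (2 * proj_err c + 2 * \<delta>) + \<nu> + c"
      using p dist_triangle[of ?z p ?x] by linarith
    then show ?thesis
      using p le_qc_err(3)[OF c] by (meson order_trans)
  qed
qed

lemma path_near_orb:
  assumes "(a, b, \<alpha>) \<in> \<Gamma>" "a \<le> b" "c \<ge> 0" "dist (\<alpha> a) (orb i1) \<le> c" "dist (\<alpha> b) (orb i2) \<le> c"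
    and "t \<in> {a..b}"
  shows "\<exists>n. dist (\<alpha> t) (orb n) \<le> qc_err c + \<delta>"
proof -
  obtain z where z: "z \<in> A" "dist (\<alpha> t) z \<le> qc_err c"
    using path_near_A[OF assms(1-3) orb_in_A assms(4) orb_in_A assms(5,6)] by blast
  obtain n where "dist (orb n) z \<le> \<delta>"
    using A_near_orb z(1) by blast
  then have "dist (\<alpha> t) (orb n) \<le> qc_err c + \<delta>"
    using z dist_triangle[of "\<alpha> t" "orb n" z] by (simp add: dist_commute)
  then show ?thesis
    by blast
qed

text \<open>Paths fellow-travel the orbit: sampling the path at unit steps and choosing nearby orbit
  indices gives an integer sequence with bounded jumps (by properness), which must pass close
  to every index between its endpoints.\<close>

lemma path_passes_near_orb:
  assumes c: "c \<ge> 0"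
  shows "\<exists>R. \<forall>a b \<alpha> i1 i2 i. (a, b, \<alpha>) \<in> \<Gamma> \<and> a \<le> b
     \<and> dist (\<alpha> a) (orb i1) \<le> c \<and> dist (\<alpha> b) (orb i2) \<le> c \<and> min i1 i2 \<le> i \<and> i \<le> max i1 i2
     \<longrightarrow> (\<exists>t\<in>{a..b}. dist (\<alpha> t) (orb i) \<le> R)"
proof -
  define Q where "Q = qc_err c + \<delta>"
  have cQ: "c \<le> Q" using le_qc_err(4)[OF c] delta_nonneg unfolding Q_def by simp
  obtain J where J: "\<forall>n. dist x0 (orb n) \<le> 2 * Q + 1 \<longrightarrow> \<bar>n\<bar> \<le> int J"
    using orb_index_bound by blast
  define D where "D = Max ((\<lambda>m. dist x0 (orb m)) ` {- int J..int J})"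
  have D: "dist x0 (orb m) \<le> D" if "\<bar>m\<bar> \<le> int J" for m
    using that unfolding D_def by (intro Max_ge) (force simp: abs_le_iff)+
  have "\<exists>t\<in>{a..b}. dist (\<alpha> t) (orb i) \<le> Q + D"
    if P: "(a, b, \<alpha>) \<in> \<Gamma>" "a \<le> b" "dist (\<alpha> a) (orb i1) \<le> c" "dist (\<alpha> b) (orb i2) \<le> c"
      and i: "min i1 i2 \<le> i" "i \<le> max i1 i2" for a b \<alpha> i1 i2 i
  proof -
    define N where "N = Suc (nat \<lceil>b - a\<rceil>)"
    define s where "s k = min (a + real k) b" for k :: nat
    define f where "f k = (if k = 0 then i1 else if k = N then i2
      else (SOME n. dist (\<alpha> (s k)) (orb n) \<le> Q))" for k
    have s_in: "s k \<in> {a..b}" for k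
      unfolding s_def using P by auto
    have s0: "s 0 = a" and sN: "s N = b"
      unfolding s_def N_def using P by (simp_all add: min_def) linarith
    have f_close: "dist (\<alpha> (s k)) (orb (f k)) \<le> Q" for k
    proof -
      consider "k = 0" | "k = N" | "k \<noteq> 0" "k \<noteq> N" by blast
      then show ?thesis
      proof cases
        case 3
        have "\<exists>n. dist (\<alpha> (s k)) (orb n) \<le> Q"
          using path_near_orb[OF P(1,2) c P(3,4) s_in] unfolding Q_def .
        then show ?thesis
          using 3 unfolding f_def by (auto intro: someI_ex)
      qed (use s0 sN P cQ in \<open>auto simp: f_def N_def\<close>)
    qed
    have step: "\<bar>f (Suc k) - f k\<bar> \<le> int J" for k
    proof -
      have "\<bar>s (Suc k) - s k\<bar> \<le> 1"
        unfolding s_def by (auto simp: min_def)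
      then have "dist (\<alpha> (s (Suc k))) (\<alpha> (s k)) \<le> 1"
        using path_quasi_geodesic(1)[OF P(1) s_in s_in] by (meson order_trans)
      then have "dist (orb (f k)) (orb (f (Suc k))) \<le> 2 * Q + 1"
        using f_close[of k] f_close[of "Suc k"] dist_triangle[of "orb (f k)" "orb (f (Suc k))" "\<alpha> (s k)"]
          dist_triangle[of "\<alpha> (s k)" "orb (f (Suc k))" "\<alpha> (s (Suc k))"] by (simp add: dist_commute)
      then show ?thesis
        using J dist_orb by metis
    qed
    obtain k where k: "k \<le> N" "\<bar>f k - i\<bar> \<le> int J"
      using int_seq_intermediate_value[of f N i "int J"] step i unfolding f_def N_def by auto
    have "dist (orb (f k)) (orb i) \<le> D"
      using D k(2) dist_orb[of "f k" i] by (simp add: abs_minus_commute)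
    then have "dist (\<alpha> (s k)) (orb i) \<le> Q + D"
      using f_close[of k] dist_triangle[of "\<alpha> (s k)" "orb i" "orb (f k)"] by linarith
    then show ?thesis
      using s_in by blast
  qed
  then show ?thesis
    by blast
qed

section \<open>The elementary closure\<close>

abbreviation E :: "'g set" where "E \<equiv> elem_closure G \<phi> A"

lemma hausdorff_close_act:
  "u \<in> carrier G \<Longrightarrow> hausdorff_close r X Y \<Longrightarrow> hausdorff_close r (\<phi> u ` X) (\<phi> u ` Y)"
  unfolding hausdorff_close_def by auto

lemma act_mult_image: "u \<in> carrier G \<Longrightarrow> v \<in> carrier G \<Longrightarrow> \<phi> (u \<otimes> v) ` X = \<phi> u ` \<phi> v ` X"
  by (auto simp: act_mult image_image)

lemma act_inv_image [simp]: "u \<in> carrier G \<Longrightarrow> \<phi> (inv u) ` \<phi> u ` X = X"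
  by (simp add: image_image)

lemma elem_closure_iff: "u \<in> E \<longleftrightarrow> u \<in> carrier G \<and> (\<exists>r. hausdorff_close r (\<phi> u ` A) A)"
  unfolding elem_closure_def hausdorff_close_def by (auto simp: dist_commute)

lemma pow_in_elem_closure: "g [^] (n::int) \<in> E"
  using g_carrier A_invariant[of n] hausdorff_close_refl[of A] elem_closure_iff by auto

lemma elem_closure_mult:
  assumes "u \<in> E" "v \<in> E"
  shows "u \<otimes> v \<in> E"
proof -
  obtain r s where u: "u \<in> carrier G" "hausdorff_close r (\<phi> u ` A) A"
    and v: "v \<in> carrier G" "hausdorff_close s (\<phi> v ` A) A"
    using assms elem_closure_iff by blast
  have "hausdorff_close s (\<phi> (u \<otimes> v) ` A) (\<phi> u ` A)"
    using hausdorff_close_act[OF u(1) v(2)] act_mult_image[OF u(1) v(1)] by simp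
  then have "hausdorff_close (s + r) (\<phi> (u \<otimes> v) ` A) A"
    using hausdorff_close_trans u(2) by blast
  then show ?thesis
    using elem_closure_iff u(1) v(1) by blast
qed

lemma elem_closure_inv:
  assumes "u \<in> E"
  shows "inv u \<in> E"
proof -
  obtain r where u: "u \<in> carrier G" "hausdorff_close r (\<phi> u ` A) A"
    using assms elem_closure_iff by blast
  have "hausdorff_close r A (\<phi> (inv u) ` A)"
    using hausdorff_close_act[OF inv_closed[OF u(1)] u(2)] u(1) by simp
  then show ?thesis
    using hausdorff_close_sym elem_closure_iff inv_closed u(1) by blast
qed

lemma subgroup_elem_closure: "subgroup E G"
proof
  show "E \<subseteq> carrier G"
    using elem_closure_iff by blast
  show "\<one> \<in> E"
    using pow_in_elem_closure[of 0] by simp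
qed (auto intro: elem_closure_mult elem_closure_inv)

lemma elem_closure_carrier: "u \<in> E \<Longrightarrow> u \<in> carrier G"
  using elem_closure_iff by blast

text \<open>For \<open>u \<in> E\<close> a long orbit segment through \<open>x0\<close>, translated by \<open>u\<close>, has its endpoints
  projecting far from the point near \<open>u x0\<close>, which is therefore uniformly close to \<open>A\<close>.\<close>

lemma elem_closure_moves_x0_near_A: "\<exists>R. \<forall>u\<in>E. \<exists>z\<in>A. dist (\<phi> u x0) z \<le> R"
proof -
  obtain R1 where R1: "\<forall>a b \<alpha> i1 i2 i. (a, b, \<alpha>) \<in> \<Gamma> \<and> a \<le> b
     \<and> dist (\<alpha> a) (orb i1) \<le> 0 \<and> dist (\<alpha> b) (orb i2) \<le> 0 \<and> min i1 i2 \<le> i \<and> i \<le> max i1 i2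
     \<longrightarrow> (\<exists>t\<in>{a..b}. dist (\<alpha> t) (orb i) \<le> R1)"
    using path_passes_near_orb[of 0] by auto
  have "\<exists>z\<in>A. dist (\<phi> u x0) z \<le> R1 + (2 * \<mu> * \<delta> + \<nu> + \<delta>)" if u: "u \<in> E" for u
  proof -
    obtain r where uc: "u \<in> carrier G" and r: "hausdorff_close r (\<phi> u ` A) A"
      using u elem_closure_iff by blast
    define w where "w = \<pi> (\<phi> u x0)"
    obtain N where N: "\<forall>n. \<bar>n\<bar> \<ge> int N \<longrightarrow> dist x0 (orb n) > \<delta> + proj_err r + lip R1 + dist w (\<phi> u x0)"
      using orb_far by blast
    have far: "dist (\<pi> (\<phi> u (orb n))) (\<pi> z) > \<delta>"
      if n: "\<bar>n\<bar> \<ge> int N" and z: "dist z (\<phi> u x0) \<le> R1" for n z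
    proof -
      obtain b where "b \<in> A" "dist (\<phi> u (orb n)) b \<le> r"
        using r orb_in_A unfolding hausdorff_close_def by blast
      then have e1: "dist (\<phi> u (orb n)) (\<pi> (\<phi> u (orb n))) \<le> proj_err r"
        using constricting_map_dist_le[OF proj_constricting] by blast
      have e2: "dist (\<pi> z) w \<le> lip R1"
        unfolding w_def using constricting_map_lipschitz[OF proj_constricting, of z "\<phi> u x0"] lip_mono[OF z]
        by linarith
      have "dist (\<phi> u (orb n)) (\<phi> u x0)
            \<le> dist (\<phi> u (orb n)) (\<pi> (\<phi> u (orb n))) + dist (\<pi> (\<phi> u (orb n))) (\<pi> z) + dist (\<pi> z) w + dist w (\<phi> u x0)"
        using dist_triangle[of "\<phi> u (orb n)" "\<phi> u x0" "\<pi> (\<phi> u (orb n))"]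
          dist_triangle[of "\<pi> (\<phi> u (orb n))" "\<phi> u x0" "\<pi> z"] dist_triangle[of "\<pi> z" "\<phi> u x0" w] by linarith
      moreover have "dist (\<phi> u (orb n)) (\<phi> u x0) = dist x0 (orb n)"
        using uc by (simp add: dist_commute)
      ultimately show ?thesis
        using e1 e2 N[rule_format, OF n] by linarith
    qed
    obtain a b \<beta> where P: "(a, b, \<beta>) \<in> \<Gamma>" "a \<le> b" "\<beta> a = orb (- int N)" "\<beta> b = orb (int N)"
      using path_between by blast
    obtain t where t: "t \<in> {a..b}" "dist (\<beta> t) x0 \<le> R1"
      using R1[rule_format, of a b \<beta> "- int N" "int N" 0] P by auto
    let ?z = "\<phi> u (\<beta> t)"
    have z: "dist ?z (\<phi> u x0) \<le> R1"
      using t uc by simp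
    have "dist ?z (\<pi> ?z) \<le> 2 * \<mu> * \<delta> + \<nu> + \<delta>"
      using proj_middle_near[OF translate_path[OF uc P(1)], of t] t far[OF _ z, of "- int N"] far[OF _ z, of "int N"] P
      by (auto simp: dist_commute)
    then have "dist (\<phi> u x0) (\<pi> ?z) \<le> R1 + (2 * \<mu> * \<delta> + \<nu> + \<delta>)"
      using z dist_triangle[of "\<phi> u x0" "\<pi> ?z" ?z] by (simp add: dist_commute)
    then show ?thesis
      using proj_in_A by blast
  qed
  then show ?thesis
    by blast
qed

lemma elem_closure_hausdorff_bound: "\<exists>R\<ge>0. \<forall>u\<in>E. hausdorff_close R (\<phi> u ` A) A"
proof -
  obtain R0 where R0: "\<forall>u\<in>E. \<exists>z\<in>A. dist (\<phi> u x0) z \<le> R0"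
    using elem_closure_moves_x0_near_A by blast
  have R0_nonneg: "R0 \<ge> 0"
    using R0 pow_in_elem_closure[of 0] by (meson order_trans zero_le_dist)
  have half: "\<exists>b\<in>A. dist (\<phi> u a) b \<le> R0 + \<delta>" if u: "u \<in> E" and a: "a \<in> A" for u a
  proof -
    obtain n where n: "dist (orb n) a \<le> \<delta>"
      using A_near_orb a by blast
    have uc: "u \<in> carrier G"
      using u elem_closure_carrier by blast
    obtain z where z: "z \<in> A" "dist (\<phi> (u \<otimes> g [^] n) x0) z \<le> R0"
      using R0 elem_closure_mult[OF u pow_in_elem_closure] by blast
    have "\<phi> (u \<otimes> g [^] n) x0 = \<phi> u (orb n)"
      unfolding orb_def using act_mult uc g_carrier by simp
    moreover have "dist (\<phi> u a) (\<phi> u (orb n)) \<le> \<delta>"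
      using uc n by (simp add: dist_commute)
    ultimately have "dist (\<phi> u a) z \<le> R0 + \<delta>"
      using z dist_triangle[of "\<phi> u a" z "\<phi> u (orb n)"] by simp
    then show ?thesis
      using z by blast
  qed
  have "hausdorff_close (R0 + \<delta>) (\<phi> u ` A) A" if u: "u \<in> E" for u
    unfolding hausdorff_close_def
  proof (intro conjI ballI)
    show "\<exists>y\<in>A. dist x y \<le> R0 + \<delta>" if "x \<in> \<phi> u ` A" for x
      using half[OF u] that by blast
    fix a assume a: "a \<in> A"
    obtain b where b: "b \<in> A" "dist (\<phi> (inv u) a) b \<le> R0 + \<delta>"
      using half[OF elem_closure_inv[OF u] a] by blast
    have uc: "u \<in> carrier G"
      using u elem_closure_carrier by blast
    have "dist (\<phi> u b) a = dist (\<phi> (inv u) a) b"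
      using dist_act[OF uc, of "\<phi> (inv u) a" b] uc by (simp add: dist_commute)
    then have "dist (\<phi> u b) a \<le> R0 + \<delta>"
      using b by simp
    then show "\<exists>x\<in>\<phi> u ` A. dist x a \<le> R0 + \<delta>"
      using b(1) by blast
  qed
  then show ?thesis
    using R0_nonneg delta_nonneg by (intro exI[of _ "R0 + \<delta>"]) auto
qed

lemma path_returns_near_proj:
  assumes c: "c \<ge> 0"
  shows "\<exists>D. \<forall>s0 s1 \<alpha> s' i j k. (s0, s1, \<alpha>) \<in> \<Gamma> \<and> s' \<in> {s0..s1} \<and> \<alpha> s1 = orb k
     \<and> dist (\<alpha> s') (orb j) \<le> c \<and> min j k \<le> i \<and> i \<le> max j k
     \<and> dist (orb i) (\<pi> (\<alpha> s0)) \<le> \<delta> \<and> dist (\<pi> (\<alpha> s0)) (\<pi> (\<alpha> s')) > \<delta>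
     \<longrightarrow> dist (\<pi> (\<alpha> s0)) (\<alpha> s') \<le> \<delta> + (\<mu> * (2 * \<delta> + D) + \<nu>)"
proof -
  obtain R where R: "\<forall>a b \<alpha> i1 i2 i. (a, b, \<alpha>) \<in> \<Gamma> \<and> a \<le> b
     \<and> dist (\<alpha> a) (orb i1) \<le> c \<and> dist (\<alpha> b) (orb i2) \<le> c \<and> min i1 i2 \<le> i \<and> i \<le> max i1 i2
     \<longrightarrow> (\<exists>t\<in>{a..b}. dist (\<alpha> t) (orb i) \<le> R)"
    using path_passes_near_orb[OF c] by blast
  have "dist (\<pi> (\<alpha> s0)) (\<alpha> s') \<le> \<delta> + (\<mu> * (2 * \<delta> + R) + \<nu>)"
    if P: "(s0, s1, \<alpha>) \<in> \<Gamma>" and s': "s' \<in> {s0..s1}" and k: "\<alpha> s1 = orb k"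
      and j: "dist (\<alpha> s') (orb j) \<le> c" and i: "min j k \<le> i" "i \<le> max j k"
      and near: "dist (orb i) (\<pi> (\<alpha> s0)) \<le> \<delta>" and far: "dist (\<pi> (\<alpha> s0)) (\<pi> (\<alpha> s')) > \<delta>"
    for s0 s1 \<alpha> s' i j k
  proof -
    have s'': "s0 \<le> s'" "s' \<le> s1" using s' by auto
    obtain r where r: "r \<in> {s0..s'}" "dist (\<alpha> r) (\<pi> (\<alpha> s0)) \<le> \<delta>"
      using constricting_map_path(1)[OF proj_constricting subpath[OF P order_refl s''] far] by blast
    obtain r' where r': "r' \<in> {s'..s1}" "dist (\<alpha> r') (orb i) \<le> R"
      using R[rule_format, of s' s1 \<alpha> j k i] subpath[OF P s'' order_refl] s'' j k i c by auto
    have "dist (\<alpha> r) (\<alpha> r') \<le> 2 * \<delta> + R"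
      using r r' near dist_triangle[of "\<alpha> r" "orb i" "\<pi> (\<alpha> s0)"] dist_triangle[of "\<alpha> r" "\<alpha> r'" "orb i"]
      by (simp add: dist_commute)
    then have "dist (\<alpha> s') (\<alpha> r) \<le> \<mu> * (2 * \<delta> + R) + \<nu>"
      using path_point_near[OF P, of r r' s'] r r' s' by auto
    then show ?thesis
      using r dist_triangle[of "\<pi> (\<alpha> s0)" "\<alpha> s'" "\<alpha> r"] by (simp add: dist_commute)
  qed
  then show ?thesis
    by blast
qed

text \<open>A path from \<open>x\<close> to a far orbit point passes near both projections of \<open>x\<close>, with a point
  of the orbit between them close to the path; this pins the two projections together.\<close>

lemma constricting_map_close_to_proj:
  assumes R: "R \<ge> 0"
  shows "\<exists>D. \<forall>B p x. constricting_map \<Gamma> \<delta> B p \<and> hausdorff_close R B A \<longrightarrow> dist (\<pi> x) (p x) \<le> D"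
proof -
  obtain D' where D': "\<forall>s0 s1 \<alpha> s' i j k. (s0, s1, \<alpha>) \<in> \<Gamma> \<and> s' \<in> {s0..s1} \<and> \<alpha> s1 = orb k
     \<and> dist (\<alpha> s') (orb j) \<le> 2 * \<delta> + R \<and> min j k \<le> i \<and> i \<le> max j k
     \<and> dist (orb i) (\<pi> (\<alpha> s0)) \<le> \<delta> \<and> dist (\<pi> (\<alpha> s0)) (\<pi> (\<alpha> s')) > \<delta>
     \<longrightarrow> dist (\<pi> (\<alpha> s0)) (\<alpha> s') \<le> \<delta> + (\<mu> * (2 * \<delta> + D') + \<nu>)"
    using path_returns_near_proj[of "2 * \<delta> + R"] R delta_nonneg by auto
  define D where "D = max (lip (\<delta> + R) + 2 * \<delta>) (\<delta> + (\<mu> * (2 * \<delta> + D') + \<nu>) + \<delta> + R)"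
  obtain N where N: "\<forall>n. \<bar>n\<bar> \<ge> int N \<longrightarrow> dist x0 (orb n) > 2 * \<delta> + R + proj_err R"
    using orb_far by blast
  have "dist (\<pi> x) (p x) \<le> D + R"
    if p: "constricting_map \<Gamma> \<delta> B p" and BA: "hausdorff_close R B A" for B p x
  proof -
    obtain bs where bs: "bs \<in> A" "dist (p x) bs \<le> R"
      using BA constricting_map_in[OF p] unfolding hausdorff_close_def by blast
    obtain i where i: "dist (orb i) (\<pi> x) \<le> \<delta>"
      using A_near_orb proj_in_A by blast
    obtain j where j: "dist (orb j) bs \<le> \<delta>"
      using A_near_orb bs(1) by blast
    define k where "k = (if i \<le> j then i - int N else i + int N)"
    have kij: "min j k \<le> i" "i \<le> max j k" "\<bar>k - j\<bar> \<ge> int N"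
      unfolding k_def by auto
    have "dist (\<pi> x) bs \<le> D"
    proof (rule ccontr)
      assume far: "\<not> dist (\<pi> x) bs \<le> D"
      obtain s0 s1 \<alpha> where P: "(s0, s1, \<alpha>) \<in> \<Gamma>" "s0 \<le> s1" "\<alpha> s0 = x" "\<alpha> s1 = orb k"
        using path_between by blast
      have "dist (orb k) (p (orb k)) \<le> proj_err R"
        using constricting_map_near_on_close_set[OF p BA orb_in_A] .
      moreover have "dist (orb j) (orb k) > 2 * \<delta> + R + proj_err R"
        using N kij(3) dist_orb[of j k] by simp
      moreover have "dist (orb j) (orb k) \<le> dist (orb j) bs + dist bs (p x) + dist (p x) (p (orb k)) + dist (p (orb k)) (orb k)"
        using dist_triangle[of "orb j" "orb k" bs] dist_triangle[of bs "orb k" "p x"]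
          dist_triangle[of "p x" "orb k" "p (orb k)"] by linarith
      ultimately have "dist (p (\<alpha> s0)) (p (\<alpha> s1)) > \<delta>"
        using j bs P(3,4) by (simp add: dist_commute)
      then obtain s' where s': "s' \<in> {s0..s1}" "dist (\<alpha> s') (p x) \<le> \<delta>"
        using constricting_map_path(1)[OF p P(1)] P(3) by blast
      have s'bs: "dist (\<alpha> s') bs \<le> \<delta> + R"
        using s' bs dist_triangle[of "\<alpha> s'" bs "p x"] by linarith
      have s'j: "dist (\<alpha> s') (orb j) \<le> 2 * \<delta> + R"
        using s'bs j dist_triangle[of "\<alpha> s'" "orb j" bs] by (simp add: dist_commute)
      have "dist (\<pi> (\<alpha> s')) (\<pi> bs) \<le> lip (\<delta> + R)"
        using constricting_map_lipschitz[OF proj_constricting, of "\<alpha> s'" bs] lip_mono[OF s'bs] by linarith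
      moreover have "dist (\<pi> bs) bs \<le> \<delta>"
        using constricting_map_near[OF proj_constricting bs(1)] by (simp add: dist_commute)
      moreover have "dist (\<pi> x) bs \<le> dist (\<pi> x) (\<pi> (\<alpha> s')) + dist (\<pi> (\<alpha> s')) (\<pi> bs) + dist (\<pi> bs) bs"
        using dist_triangle[of "\<pi> x" bs "\<pi> (\<alpha> s')"] dist_triangle[of "\<pi> (\<alpha> s')" bs "\<pi> bs"] by linarith
      moreover have far1: "dist (\<pi> x) bs > lip (\<delta> + R) + 2 * \<delta>"
        and far2: "dist (\<pi> x) bs > \<delta> + (\<mu> * (2 * \<delta> + D') + \<nu>) + \<delta> + R"
        using far unfolding D_def by auto
      ultimately have "dist (\<pi> x) (\<pi> (\<alpha> s')) > \<delta>"
        by linarith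
      then have "dist (\<pi> x) (\<alpha> s') \<le> \<delta> + (\<mu> * (2 * \<delta> + D') + \<nu>)"
        using D'[rule_format, of s0 s1 \<alpha> s' k j i] P s' s'j kij i by auto
      then have "dist (\<pi> x) bs \<le> \<delta> + (\<mu> * (2 * \<delta> + D') + \<nu>) + \<delta> + R"
        using s'bs dist_triangle[of "\<pi> x" bs "\<alpha> s'"] by linarith
      then show False
        using far2 by linarith
    qed
    then show ?thesis
      using bs dist_triangle[of "\<pi> x" "p x" bs] by (simp add: dist_commute)
  qed
  then show ?thesis
    by blast
qed

lemma proj_coarsely_equivariant: "\<exists>C\<ge>0. \<forall>u\<in>E. \<forall>x. dist (\<pi> (\<phi> u x)) (\<phi> u (\<pi> x)) \<le> C"
proof -
  obtain R where R: "R \<ge> 0" "\<forall>u\<in>E. hausdorff_close R (\<phi> u ` A) A"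
    using elem_closure_hausdorff_bound by blast
  obtain D where D: "\<forall>B p x. constricting_map \<Gamma> \<delta> B p \<and> hausdorff_close R B A \<longrightarrow> dist (\<pi> x) (p x) \<le> D"
    using constricting_map_close_to_proj[OF R(1)] by blast
  have "dist (\<pi> (\<phi> u x)) (\<phi> u (\<pi> x)) \<le> D" if u: "u \<in> E" for u x
  proof -
    have uc: "u \<in> carrier G"
      using u elem_closure_carrier by blast
    have "dist (\<pi> (\<phi> u x)) (\<phi> u (\<pi> (\<phi> (inv u) (\<phi> u x)))) \<le> D"
      using D constricting_map_translate[OF uc proj_constricting] R(2) u by blast
    then show ?thesis
      using uc by simp
  qed
  moreover have "D \<ge> 0"
    using calculation[OF pow_in_elem_closure[of 0], of x0] by (meson order_trans zero_le_dist)
  ultimately show ?thesis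
    by blast
qed

lemma elem_closure_virtually_cyclic:
  "\<exists>F. finite F \<and> (\<forall>u\<in>E. \<exists>n::int. inv (g [^] n) \<otimes> u \<in> F)"
proof -
  obtain R where R: "\<forall>u\<in>E. \<exists>z\<in>A. dist (\<phi> u x0) z \<le> R"
    using elem_closure_moves_x0_near_A by blast
  let ?F = "{h \<in> carrier G. dist x0 (\<phi> h x0) \<le> R + \<delta>}"
  have "\<exists>n::int. inv (g [^] n) \<otimes> u \<in> ?F" if u: "u \<in> E" for u
  proof -
    have uc: "u \<in> carrier G"
      using u elem_closure_carrier by blast
    obtain z where z: "z \<in> A" "dist (\<phi> u x0) z \<le> R"
      using R u by blast
    obtain n where n: "dist (orb n) z \<le> \<delta>"
      using A_near_orb z(1) by blast
    have "dist x0 (\<phi> (inv (g [^] n) \<otimes> u) x0) = dist (orb n) (\<phi> u x0)"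
      using dist_act[of "g [^] n" x0 "\<phi> (inv (g [^] n) \<otimes> u) x0"] g_carrier uc
      unfolding orb_def by (simp add: act_mult)
    also have "\<dots> \<le> R + \<delta>"
      using z n dist_triangle[of "orb n" "\<phi> u x0" z] by (simp add: dist_commute)
    finally show ?thesis
      using uc g_carrier by blast
  qed
  moreover have "finite ?F"
    by (rule finite_small_displacement)
  ultimately show ?thesis
    by blast
qed

lemma elem_closure_conj_pow:
  assumes k: "k \<in> E"
  shows "\<exists>m::nat. m > 0 \<and> (\<exists>a::int. k \<otimes> g [^] (int m) \<otimes> inv k = g [^] a)"
proof -
  obtain F where F: "finite F" "\<forall>u\<in>E. \<exists>n::int. inv (g [^] n) \<otimes> u \<in> F"
    using elem_closure_virtually_cyclic by blast
  have "k \<otimes> g [^] (int n) \<otimes> inv k \<in> E" for n :: nat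
    by (rule elem_closure_mult[OF elem_closure_mult[OF k pow_in_elem_closure] elem_closure_inv[OF k]])
  then have "\<forall>n::nat. \<exists>a::int. inv (g [^] a) \<otimes> (k \<otimes> g [^] (int n) \<otimes> inv k) \<in> F"
    using F(2) by blast
  then show ?thesis
    by (rule conj_pow_of_finite_cosets[OF g_carrier elem_closure_carrier[OF k] F(1)])
qed

lemma dist_conj_by_pow:
  "k \<in> carrier G \<Longrightarrow> dist x0 (\<phi> (inv (g [^] (j::int)) \<otimes> k \<otimes> g [^] j) x0) = dist (orb j) (\<phi> k (orb j))"
  using dist_act[of "g [^] j" x0 "\<phi> (inv (g [^] j) \<otimes> k \<otimes> g [^] j) x0"] g_carrier
  unfolding orb_def by (simp add: act_mult)

lemma torsion_conj_pow_pm_uniform: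
  "\<exists>P::nat. P > 0 \<and> (\<forall>h\<in>E. dist x0 (\<phi> h x0) \<le> c \<longrightarrow> (\<exists>q::nat. q > 0 \<and> h [^] q = \<one>)
      \<longrightarrow> conj_pow_pm G g (int P) h)"
proof -
  define F where "F = {h \<in> carrier G. dist x0 (\<phi> h x0) \<le> c \<and> h \<in> E \<and> (\<exists>q::nat. q > 0 \<and> h [^] q = \<one>)}"
  have F_carrier: "F \<subseteq> carrier G"
    unfolding F_def by blast
  have "finite F"
    using finite_small_displacement[of x0 c] by (rule finite_subset[rotated]) (auto simp: F_def)
  moreover have "\<forall>h\<in>F. \<exists>m::nat. m > 0 \<and> conj_pow_pm G g (int m) h"
  proof
    fix h assume h: "h \<in> F"
    obtain q :: nat where q: "q > 0" "h [^] q = \<one>" and hE: "h \<in> E"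
      using h unfolding F_def by blast
    obtain m :: nat and a :: int where "m > 0" "h \<otimes> g [^] (int m) \<otimes> inv h = g [^] a"
      using elem_closure_conj_pow[OF hE] by blast
    then show "\<exists>m::nat. m > 0 \<and> conj_pow_pm G g (int m) h"
      using conj_pow_pm_of_torsion[OF g_carrier g_infinite_order elem_closure_carrier[OF hE] q] by blast
  qed
  ultimately obtain P where "P > 0" "\<forall>h\<in>F. conj_pow_pm G g (int P) h"
    using common_conj_pow_pm_exponent[OF g_carrier _ F_carrier] by blast
  then show ?thesis
    unfolding F_def using elem_closure_carrier by blast
qed

lemma conj_by_pow_of_bounded_subgroup:
  assumes K: "subgroup K G" "K \<subseteq> E" and bound: "\<forall>k\<in>K. dist (orb j) (\<phi> k (orb j)) \<le> c"
    and k: "k \<in> K"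
  shows "inv (g [^] j) \<otimes> k \<otimes> g [^] j \<in> E"
    and "dist x0 (\<phi> (inv (g [^] j) \<otimes> k \<otimes> g [^] j) x0) \<le> c"
    and "\<exists>q::nat. q > 0 \<and> (inv (g [^] j) \<otimes> k \<otimes> g [^] j) [^] q = \<one>"
proof -
  let ?k' = "inv (g [^] j) \<otimes> k \<otimes> g [^] j"
  have kc: "k \<in> carrier G"
    using k K(1) subgroup.subset by blast
  have k'c: "?k' \<in> carrier G"
    using kc g_carrier by simp
  have "k \<in> E"
    using k K(2) by blast
  then show "?k' \<in> E"
    by (rule elem_closure_mult[OF elem_closure_mult[OF elem_closure_inv[OF pow_in_elem_closure]] pow_in_elem_closure])
  have small: "dist x0 (\<phi> (?k' [^] n) x0) \<le> c" for n :: nat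
  proof -
    have "k [^] n \<in> K"
      using subgroup_int_pow_closed[OF K(1) k, of "int n"] by (simp add: int_pow_int)
    then show ?thesis
      using bound conj_nat_pow[of "g [^] j" k n] g_carrier kc dist_conj_by_pow[of "k [^] n" j] by simp
  qed
  from small[of 1] show "dist x0 (\<phi> ?k' x0) \<le> c"
    using k'c by simp
  have "range (\<lambda>n::nat. ?k' [^] n) \<subseteq> {h \<in> carrier G. dist x0 (\<phi> h x0) \<le> c}"
    using k'c small by auto
  then have "finite (range (\<lambda>n::nat. ?k' [^] n))"
    using finite_small_displacement by (rule finite_subset)
  then show "\<exists>q::nat. q > 0 \<and> ?k' [^] q = \<one>"
    by (rule torsion_of_finite_powers[OF k'c])
qed

text \<open>Conjugated by a suitable power of \<open>g\<close>, such subgroups consist of torsion elements of \<open>E\<close>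
  moving \<open>x0\<close> boundedly, of which there are only finitely many.\<close>

lemma uniform_conj_pow_pm:
  "\<exists>P::nat. P > 0 \<and> (\<forall>K j. subgroup K G \<longrightarrow> K \<subseteq> E \<longrightarrow> (\<forall>k\<in>K. dist (orb j) (\<phi> k (orb j)) \<le> c)
      \<longrightarrow> (\<forall>k\<in>K. conj_pow_pm G g (int P) k))"
proof -
  obtain P where P: "P > 0" "\<forall>h\<in>E. dist x0 (\<phi> h x0) \<le> c \<longrightarrow> (\<exists>q::nat. q > 0 \<and> h [^] q = \<one>)
      \<longrightarrow> conj_pow_pm G g (int P) h"
    using torsion_conj_pow_pm_uniform by blast
  have "conj_pow_pm G g (int P) k"
    if K: "subgroup K G" "K \<subseteq> E" "\<forall>k\<in>K. dist (orb j) (\<phi> k (orb j)) \<le> c" and k: "k \<in> K" for K j k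
  proof -
    have "k \<in> carrier G"
      using k K(1) subgroup.subset by blast
    then show ?thesis
      using conj_pow_pm_of_conj_by_pow[OF g_carrier] P(2) conj_by_pow_of_bounded_subgroup[OF K k] by blast
  qed
  then show ?thesis
    using P(1) by blast
qed

section \<open>Separation\<close>

lemma displacement_le_via_proj:
  assumes u: "u \<in> carrier G" and C: "dist (\<pi> (\<phi> u y2)) (\<phi> u (\<pi> y2)) \<le> C"
  shows "dist q (\<phi> u q) \<le> dist q (\<pi> y1) + dist (\<pi> y1) (\<pi> (\<phi> u y2)) + C + dist (\<pi> y2) q"
proof -
  have "dist (\<phi> u (\<pi> y2)) (\<phi> u q) = dist (\<pi> y2) q"
    using u by simp
  then show ?thesis
    using C dist_triangle[of q "\<phi> u q" "\<pi> y1"] dist_triangle[of "\<pi> y1" "\<phi> u q" "\<pi> (\<phi> u y2)"]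
      dist_triangle[of "\<pi> (\<phi> u y2)" "\<phi> u q" "\<phi> u (\<pi> y2)"] by linarith
qed

lemma stabilizer_moves_orb_boundedly:
  assumes C: "\<forall>u\<in>E. \<forall>x. dist (\<pi> (\<phi> u x)) (\<phi> u (\<pi> x)) \<le> C"
    and y: "y \<in> Y" and Y_inv: "\<forall>h\<in>H. \<phi> h ` Y = Y" and Y_diam: "\<forall>y\<in>Y. \<forall>z\<in>Y. dist (\<pi> y) (\<pi> z) \<le> \<epsilon>"
    and j: "dist (orb j) (\<pi> y) \<le> \<delta>" and k: "k \<in> H \<inter> E"
  shows "dist (orb j) (\<phi> k (orb j)) \<le> \<epsilon> + C + 2 * \<delta>"
proof -
  have "\<phi> k y \<in> Y"
    using Y_inv k y by blast
  then have "dist (\<pi> y) (\<pi> (\<phi> k y)) \<le> \<epsilon>"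
    using Y_diam y by blast
  moreover have "dist (orb j) (\<phi> k (orb j)) \<le> dist (orb j) (\<pi> y) + dist (\<pi> y) (\<pi> (\<phi> k y)) + C + dist (\<pi> y) (orb j)"
    using displacement_le_via_proj[of k y C "orb j" y] elem_closure_carrier C k by blast
  ultimately show ?thesis
    using j by (simp add: dist_commute)
qed

lemma translation_moves_orb_far:
  assumes k: "k \<in> carrier G" and bound: "dist (orb j) (\<phi> k (orb j)) \<le> c"
  shows "dist (orb j) (\<phi> (g [^] n \<otimes> k) (orb j)) \<ge> dist x0 (orb n) - c"
proof -
  have "orb (j + n) = \<phi> (g [^] n) (orb j)"
    unfolding orb_def using g_carrier act_mult int_pow_mult[of g n j] by (simp add: add.commute)
  then have "dist (orb (j + n)) (\<phi> (g [^] n \<otimes> k) (orb j)) = dist (orb j) (\<phi> k (orb j))"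
    using g_carrier k by (simp add: act_mult)
  moreover have "dist (orb j) (orb (j + n)) = dist x0 (orb n)"
    using dist_orb by simp
  ultimately show ?thesis
    using bound dist_triangle[of "orb j" "orb (j + n)" "\<phi> (g [^] n \<otimes> k) (orb j)"] by (simp add: dist_commute)
qed

lemma orb_far_of_nonzero_multiple:
  assumes B: "\<forall>n. dist x0 (orb n) \<le> r \<longrightarrow> \<bar>n\<bar> \<le> int B" and M: "B < M" and i: "i \<noteq> 0"
  shows "dist x0 (orb (int M * i)) > r"
proof -
  have "int M * 1 \<le> int M * \<bar>i\<bar>"
    using i by (intro mult_left_mono) auto
  then have "\<bar>int M * i\<bar> \<ge> int M"
    by (simp add: abs_mult)
  moreover have "int B < int M"
    using M by simp
  ultimately have "\<bar>int M * i\<bar> > int B"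
    by linarith
  then show ?thesis
    using B[rule_format, of "int M * i"] by (meson not_le)
qed

lemma generate_pow_inter_elem_closure: "generate G ({g [^] (M::nat)} \<union> (H \<inter> E)) \<subseteq> E"
proof (rule generate_subgroup_incl[OF _ subgroup_elem_closure])
  show "{g [^] M} \<union> (H \<inter> E) \<subseteq> E"
    using pow_in_elem_closure[of "int M"] by (auto simp: int_pow_int)
qed

lemma proj_dist_gt_of_far_translation:
  assumes C: "\<forall>u\<in>E. \<forall>x. dist (\<pi> (\<phi> u x)) (\<phi> u (\<pi> x)) \<le> C" and u: "u \<in> E"
    and y: "y \<in> Y" and Y_diam: "\<forall>y\<in>Y. \<forall>z\<in>Y. dist (\<pi> y) (\<pi> z) \<le> \<epsilon>"
    and j: "dist (orb j) (\<pi> y) \<le> \<delta>"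
    and far: "dist (orb j) (\<phi> u (orb j)) > \<theta> + 2 * (\<epsilon> + \<delta>) + C"
  shows "proj_dist \<pi> Y (\<phi> u ` Y) > \<theta>"
proof -
  let ?b = "dist (orb j) (\<phi> u (orb j)) - 2 * (\<epsilon> + \<delta>) - C"
  have "?b \<le> dist (\<pi> y1) (\<pi> (\<phi> u y2))" if y1: "y1 \<in> Y" and y2: "y2 \<in> Y" for y1 y2
  proof -
    have "dist (\<pi> y) (\<pi> y1) \<le> \<epsilon>" "dist (\<pi> y2) (\<pi> y) \<le> \<epsilon>"
      using Y_diam y y1 y2 by blast+
    then have "dist (orb j) (\<pi> y1) \<le> \<delta> + \<epsilon>" "dist (\<pi> y2) (orb j) \<le> \<epsilon> + \<delta>"
      using j dist_triangle[of "orb j" "\<pi> y1" "\<pi> y"] dist_triangle[of "\<pi> y2" "orb j" "\<pi> y"]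
        dist_commute[of "\<pi> y" "orb j"] by linarith+
    then show ?thesis
      using displacement_le_via_proj[of u y2 C "orb j" y1] elem_closure_carrier[OF u] C u by fastforce
  qed
  then have "?b \<le> proj_dist \<pi> Y (\<phi> u ` Y)"
    using y by (intro proj_dist_ge) auto
  then show ?thesis
    using far by linarith
qed

lemma elementary_subgroup_separation:
  "\<exists>M::nat. M \<ge> 1 \<and> (\<forall>H Y. subgroup H G \<longrightarrow> Y \<noteq> {} \<longrightarrow> (\<forall>h\<in>H. \<phi> h ` Y = Y) \<longrightarrow>
       (\<forall>y\<in>Y. \<forall>z\<in>Y. dist (\<pi> y) (\<pi> z) \<le> \<epsilon>) \<longrightarrow>
       (\<forall>u \<in> generate G ({g [^] M} \<union> (H \<inter> E)) - (H \<inter> E). proj_dist \<pi> Y (\<phi> u ` Y) > \<theta>))"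
proof -
  obtain C where C: "\<forall>u\<in>E. \<forall>x. dist (\<pi> (\<phi> u x)) (\<phi> u (\<pi> x)) \<le> C"
    using proj_coarsely_equivariant by blast
  define c where "c = \<epsilon> + C + 2 * \<delta>"
  obtain P where P: "P > 0" "\<forall>K j. subgroup K G \<longrightarrow> K \<subseteq> E \<longrightarrow> (\<forall>k\<in>K. dist (orb j) (\<phi> k (orb j)) \<le> c)
      \<longrightarrow> (\<forall>k\<in>K. conj_pow_pm G g (int P) k)"
    using uniform_conj_pow_pm by blast
  obtain B where B: "\<forall>n. dist x0 (orb n) \<le> \<theta> + 2 * (\<epsilon> + \<delta>) + C + c \<longrightarrow> \<bar>n\<bar> \<le> int B"
    using orb_index_bound by blast
  define M where "M = P * (B + 1)"
  have M: "M \<ge> 1" "M \<ge> B + 1"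
    unfolding M_def using P(1) mult_le_mono1[of 1 P "B + 1"] by simp_all
  have "proj_dist \<pi> Y (\<phi> u ` Y) > \<theta>"
    if H: "subgroup H G" and Y: "Y \<noteq> {}" "\<forall>h\<in>H. \<phi> h ` Y = Y" "\<forall>y\<in>Y. \<forall>z\<in>Y. dist (\<pi> y) (\<pi> z) \<le> \<epsilon>"
      and u: "u \<in> generate G ({g [^] M} \<union> (H \<inter> E)) - (H \<inter> E)" for H Y u
  proof -
    obtain y where y: "y \<in> Y" using Y(1) by blast
    obtain j where j: "dist (orb j) (\<pi> y) \<le> \<delta>"
      using A_near_orb proj_in_A by blast
    have K: "subgroup (H \<inter> E) G" "H \<inter> E \<subseteq> E"
      using subgroups_Inter_pair[OF H subgroup_elem_closure] by auto
    have bound: "\<forall>k\<in>H \<inter> E. dist (orb j) (\<phi> k (orb j)) \<le> c"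
      using stabilizer_moves_orb_boundedly[OF C y Y(2,3) j] unfolding c_def by blast
    have "\<forall>k\<in>H \<inter> E. conj_pow_pm G g (int M) k"
      using P(2) K bound conj_pow_pm_multiple[OF g_carrier] subgroup.subset[OF K(1)]
      unfolding M_def by (metis of_nat_mult subsetD)
    then obtain i k where i: "i \<noteq> 0" and ik: "k \<in> H \<inter> E" "u = g [^] (int M * i) \<otimes> k"
      using generate_pow_subgroup_outside[OF g_carrier K(1) _ u] by blast
    then have "dist x0 (orb (int M * i)) > \<theta> + 2 * (\<epsilon> + \<delta>) + C + c"
      using orb_far_of_nonzero_multiple[OF B _ i] M(2) by simp
    then have "dist (orb j) (\<phi> u (orb j)) > \<theta> + 2 * (\<epsilon> + \<delta>) + C"
      using translation_moves_orb_far[of k j c "int M * i"] bound ik subgroup.subset[OF K(1)] by force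
    moreover have "u \<in> E"
      using u generate_pow_inter_elem_closure by blast
    ultimately show ?thesis
      using proj_dist_gt_of_far_translation[OF C _ y Y(3) j] by blast
  qed
  then show ?thesis
    using M(1) by blast
qed

end

theorem mainTheorem18:
  fixes G :: "('g, 'm) monoid_scheme" and \<phi> :: "'g \<Rightarrow> 'x::metric_space \<Rightarrow> 'x"
    and \<Gamma> :: "'x pth set" and \<mu> \<nu> \<delta> :: real and g :: 'g and A :: "'x set" and \<pi> :: "'x \<Rightarrow> 'x"
  assumes "path_system_group \<mu> \<nu> G \<phi> \<Gamma>"
    and "constricting_element G \<phi> \<Gamma> \<delta> g A \<pi>"
    and "\<epsilon> \<ge> 0" and "\<theta> \<ge> 0"
  shows "\<exists>M::nat. M \<ge> 1 \<and>
    (\<forall>H Y. subgroup H G \<longrightarrow> Y \<noteq> {} \<longrightarrow> (\<forall>h\<in>H. \<phi> h ` Y = Y) \<longrightarrow>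
       (\<forall>y\<in>Y. \<forall>z\<in>Y. dist (\<pi> y) (\<pi> z) \<le> \<epsilon>) \<longrightarrow>
       (\<forall>u \<in> generate G ({g [^]\<^bsub>G\<^esub> M} \<union> (H \<inter> elem_closure G \<phi> A)) - (H \<inter> elem_closure G \<phi> A).
          proj_dist \<pi> Y (\<phi> u ` Y) > \<theta>))"
proof -
  interpret constricting_setting G \<phi> \<Gamma> \<mu> \<nu> \<delta> g A \<pi>
    using assms(1,2) by unfold_locales
  show ?thesis
    by (rule elementary_subgroup_separation)
qed

end
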